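(* Let $k\ge 2$, let $\alpha\in(0,1)$, let $n$ be large, and let $H$ be a graph in $\mathrm{SPEX}(n, C_{2k+2})$ or in $\mathrm{SPEX}(n,\{C_{2k+1},C_{2k+2}\})$, with Perron vector $\mathrm{v}$ normalized so that $\max_u \mathrm{v}_u = 1$. Let $L=\{u : \mathrm{v}_u>\alpha\}$ and $M=\{u : \mathrm{v}_u \ge \alpha/3\}$. Then $$|L| \leq \frac{16k^{1/2}n^{(k+3)/(2k+2)}}{\alpha}\quad\text{and}\quad |M| \leq \frac{48k^{1/2}n^{(k+3)/(2k+2)}}{\alpha}.$$
   Context: $\mathrm{SPEX}(n,\mathcal{F})$ is the set of $n$-vertex graphs with no subgraph in $\mathcal{F}$ whose adjacency spectral radius is maximum among all such graphs. Such extremal graphs are connected, so the adjacency matrix has a unique (up to scaling) entrywise positive eigenvector for its spectral radius $\lambda(H)$, the Perron vector; $\mathrm{v}_u$ denotes its entry at vertex $u$. *)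

theory Defs
  imports Complex_Main "Jordan_Normal_Form.Spectral_Radius"
begin

definition graph_on :: "nat \<Rightarrow> (nat \<Rightarrow> nat \<Rightarrow> bool) \<Rightarrow> bool" where
  "graph_on n E \<longleftrightarrow> (\<forall>i j. E i j \<longrightarrow> i < n \<and> j < n) \<and> (\<forall>i j. E i j \<longrightarrow> E j i) \<and> (\<forall>i. \<not> E i i)"

definition contains_cycle :: "nat \<Rightarrow> (nat \<Rightarrow> nat \<Rightarrow> bool) \<Rightarrow> nat \<Rightarrow> bool" where
  "contains_cycle n E m \<longleftrightarrow> (\<exists>f. inj_on f {0..<m} \<and> f ` {0..<m} \<subseteq> {0..<n}
       \<and> (\<forall>i<m. E (f i) (f (Suc i mod m))))"

definition cycle_free :: "nat \<Rightarrow> (nat \<Rightarrow> nat \<Rightarrow> bool) \<Rightarrow> nat set \<Rightarrow> bool" where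
  "cycle_free n E F \<longleftrightarrow> (\<forall>m\<in>F. \<not> contains_cycle n E m)"

definition adj_mat :: "nat \<Rightarrow> (nat \<Rightarrow> nat \<Rightarrow> bool) \<Rightarrow> complex mat" where
  "adj_mat n E = mat n n (\<lambda>(i,j). if E i j then 1 else 0)"

definition graph_spec_radius :: "nat \<Rightarrow> (nat \<Rightarrow> nat \<Rightarrow> bool) \<Rightarrow> real" where
  "graph_spec_radius n E = spectral_radius (adj_mat n E)"

definition SPEX :: "nat \<Rightarrow> nat set \<Rightarrow> (nat \<Rightarrow> nat \<Rightarrow> bool) set" where
  "SPEX n F = {E. graph_on n E \<and> cycle_free n E F \<and>
     (\<forall>E'. graph_on n E' \<and> cycle_free n E' F \<longrightarrow> graph_spec_radius n E' \<le> graph_spec_radius n E)}"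

definition normalized_perron :: "nat \<Rightarrow> (nat \<Rightarrow> nat \<Rightarrow> bool) \<Rightarrow> (nat \<Rightarrow> real) \<Rightarrow> bool" where
  "normalized_perron n E v \<longleftrightarrow> (\<forall>u<n. v u > 0) \<and>
     (\<forall>u<n. (\<Sum>w<n. if E u w then v w else 0) = graph_spec_radius n E * v u) \<and>
     Max (v ` {0..<n}) = 1"

end

theory Submission
  imports Defs "HOL-Number_Theory.Cong"
begin

text \<open>The complete bipartite graph \<open>K\<^sub>k\<^sub>,\<^sub>n\<^sub>-\<^sub>k\<close> has no cycle of length
  \<open>2k+1\<close> or more, so an extremal graph \<open>H\<close> has \<open>\<lambda>(H) \<ge> \<surd>(k(n-k))\<close>. With
  \<open>max v = 1\<close>, \<open>\<lambda> v\<^sub>u = \<Sum>\<^bsub>w\<sim>u\<^esub> v\<^sub>w \<le> deg u\<close>, hence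
  \<open>|{u. v\<^sub>u \<ge> \<beta>}| \<le> 2e(H) / (\<lambda> \<beta>)\<close>. It remains to bound \<open>2e(H)\<close> for a
  \<open>C\<^sub>2\<^sub>k\<^sub>+\<^sub>2\<close>-free graph by \<open>10k n\<^sup>1\<^sup>+\<^sup>1\<^sup>/\<^sup>(\<^sup>k\<^sup>+\<^sup>1\<^sup>)\<close>:
  otherwise it has a bipartite subgraph of large minimum degree, and a breadth-first search
  in that subgraph has levels growing by a factor of at least \<open>n\<^sup>1\<^sup>/\<^sup>(\<^sup>k\<^sup>+\<^sup>1\<^sup>)\<close>,
  since two consecutive levels spanning many edges contain a \<open>C\<^sub>2\<^sub>k\<^sub>+\<^sub>2\<close> (a
  Bondy--Simonovits type argument on a longest path with a chord). Level \<open>k+1\<close> would then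
  have more than \<open>n\<close> vertices.\<close>

section \<open>Degrees, dense subgraphs and cuts\<close>

definition deg :: "(nat \<Rightarrow> nat \<Rightarrow> bool) \<Rightarrow> nat set \<Rightarrow> nat \<Rightarrow> nat" where
  "deg R W v = card {w\<in>W. R v w}"

lemma sum_deg_remove:
  assumes fin: "finite W" and sym: "\<forall>u w. R u w \<longrightarrow> R w u" and no_loop: "\<forall>u. \<not> R u u" and x: "x \<in> W"
  shows "(\<Sum>v\<in>W. deg R W v) = (\<Sum>v\<in>W-{x}. deg R (W-{x}) v) + 2 * deg R W x"
proof -
  have a: "(\<Sum>v\<in>W. deg R W v) = deg R W x + (\<Sum>v\<in>W-{x}. deg R W v)"
    using fin x by (simp add: sum.remove)
  have b: "deg R W v = deg R (W-{x}) v + (if R v x then 1 else 0)" if "v \<in> W - {x}" for v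
  proof -
    have "{w\<in>W. R v w} = {w\<in>W-{x}. R v w} \<union> (if R v x then {x} else {})" using x by auto
    moreover have "finite {w\<in>W-{x}. R v w}" using fin by simp
    ultimately show ?thesis unfolding deg_def by (auto simp: card_insert_if)
  qed
  have c: "(\<Sum>v\<in>W-{x}. (if R v x then 1 else 0::nat)) = deg R W x"
  proof -
    have "(\<Sum>v\<in>W-{x}. (if R v x then 1 else 0::nat)) = card {v\<in>W-{x}. R v x}"
      using fin by (simp add: sum.If_cases Int_def)
    also have "{v\<in>W-{x}. R v x} = {w\<in>W. R x w}" using sym no_loop by auto
    finally show ?thesis unfolding deg_def .
  qed
  have "(\<Sum>v\<in>W-{x}. deg R W v)
      = (\<Sum>v\<in>W-{x}. deg R (W-{x}) v) + (\<Sum>v\<in>W-{x}. (if R v x then 1 else 0::nat))"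
    using b by (simp add: sum.distrib)
  with a c show ?thesis by simp
qed

text \<open>Deleting a vertex of degree at most \<open>t\<close> keeps the average degree above \<open>2t\<close>.\<close>
lemma exists_min_degree_subgraph:
  fixes t :: real
  assumes "finite W" "\<forall>u w. R u w \<longrightarrow> R w u" "\<forall>u. \<not> R u u"
    "real (\<Sum>v\<in>W. deg R W v) > 2 * t * real (card W)"
  shows "\<exists>W'\<subseteq>W. W' \<noteq> {} \<and> (\<forall>v\<in>W'. real (deg R W' v) > t)"
  using assms
proof (induction "card W" arbitrary: W rule: less_induct)
  case less
  show ?case
  proof (cases "\<forall>v\<in>W. real (deg R W v) > t")
    case True
    have "W \<noteq> {}" using less.prems(4) by auto
    with True show ?thesis by blast
  next
    case False
    then obtain x where x: "x \<in> W" "real (deg R W x) \<le> t" by force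
    have eq: "(\<Sum>v\<in>W. deg R W v) = (\<Sum>v\<in>W-{x}. deg R (W-{x}) v) + 2 * deg R W x"
      using sum_deg_remove[OF less.prems(1-3) x(1)] .
    have cW: "card W = Suc (card (W-{x}))" using card_Suc_Diff1[OF less.prems(1) x(1)] by simp
    have "real (\<Sum>v\<in>W-{x}. deg R (W-{x}) v) > 2 * t * real (card (W-{x}))"
      using less.prems(4) x(2) unfolding eq cW by (simp add: algebra_simps)
    moreover have "card (W-{x}) < card W" using cW by simp
    ultimately obtain W' where "W' \<subseteq> W-{x}" "W' \<noteq> {}" "\<forall>v\<in>W'. real (deg R W' v) > t"
      using less.hyps[of "W-{x}"] less.prems(1-3) by auto
    thus ?thesis by blast
  qed
qed

definition cut_edges :: "(nat \<Rightarrow> nat \<Rightarrow> bool) \<Rightarrow> nat set \<Rightarrow> nat \<Rightarrow> nat \<Rightarrow> bool" where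
  "cut_edges R X u w \<longleftrightarrow> R u w \<and> (u \<in> X \<longleftrightarrow> w \<notin> X)"

lemma cut_edges_sym: "\<forall>u w. R u w \<longrightarrow> R w u \<Longrightarrow> \<forall>u w. cut_edges R X u w \<longrightarrow> cut_edges R X w u"
  unfolding cut_edges_def by auto
lemma cut_edges_irrefl: "\<forall>u. \<not> cut_edges R X u u" unfolding cut_edges_def by auto

lemma sum_cut_deg_flip:
  assumes fin: "finite S" and sym: "\<forall>u w. R u w \<longrightarrow> R w u" and no_loop: "\<forall>u. \<not> R u u" and v: "v \<in> S"
  shows "(\<Sum>u\<in>S. deg (cut_edges R (X - {v} \<union> ({v} - X))) S u) + 4 * deg (cut_edges R X) S v
       = (\<Sum>u\<in>S. deg (cut_edges R X) S u) + 2 * deg R S v"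
proof -
  define X' where "X' = X - {v} \<union> ({v} - X)"
  have s1: "(\<Sum>u\<in>S. deg (cut_edges R X) S u)
      = (\<Sum>u\<in>S-{v}. deg (cut_edges R X) (S-{v}) u) + 2 * deg (cut_edges R X) S v"
    by (rule sum_deg_remove[OF fin cut_edges_sym[OF sym] cut_edges_irrefl v])
  have s2: "(\<Sum>u\<in>S. deg (cut_edges R X') S u)
      = (\<Sum>u\<in>S-{v}. deg (cut_edges R X') (S-{v}) u) + 2 * deg (cut_edges R X') S v"
    by (rule sum_deg_remove[OF fin cut_edges_sym[OF sym] cut_edges_irrefl v])
  have same: "deg (cut_edges R X') (S-{v}) u = deg (cut_edges R X) (S-{v}) u" if "u \<in> S - {v}" for u
  proof -
    have "{w\<in>S-{v}. cut_edges R X' u w} = {w\<in>S-{v}. cut_edges R X u w}"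
      using that unfolding cut_edges_def X'_def by auto
    thus ?thesis unfolding deg_def by simp
  qed
  have dv: "deg (cut_edges R X') S v + deg (cut_edges R X) S v = deg R S v"
  proof -
    have "{w\<in>S. R v w} = {w\<in>S. cut_edges R X' v w} \<union> {w\<in>S. cut_edges R X v w}"
      using no_loop unfolding cut_edges_def X'_def by auto
    moreover have "{w\<in>S. cut_edges R X' v w} \<inter> {w\<in>S. cut_edges R X v w} = {}"
      using no_loop unfolding cut_edges_def X'_def by auto
    ultimately show ?thesis unfolding deg_def using fin
      by (simp add: card_Un_disjoint)
  qed
  have "(\<Sum>u\<in>S-{v}. deg (cut_edges R X') (S-{v}) u) = (\<Sum>u\<in>S-{v}. deg (cut_edges R X) (S-{v}) u)"
    using same by (rule sum.cong[OF refl])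
  with s1 s2 dv show ?thesis unfolding X'_def[symmetric] by linarith
qed

text \<open>A cut with the maximum number of crossing edges: moving a vertex with fewer than half
  of its edges crossing to the other side would increase that number.\<close>
lemma exists_half_degree_cut:
  assumes fin: "finite S" and sym: "\<forall>u w. R u w \<longrightarrow> R w u" and no_loop: "\<forall>u. \<not> R u u"
  shows "\<exists>X. \<forall>v\<in>S. deg R S v \<le> 2 * deg (cut_edges R X) S v"
proof -
  define f where "f X = (\<Sum>u\<in>S. deg (cut_edges R X) S u)" for X
  have "finite (f ` Pow S)" using fin by simp
  moreover have "f ` Pow S \<noteq> {}" by blast
  ultimately have "Max (f ` Pow S) \<in> f ` Pow S" by (rule Max_in)
  then obtain X where X: "X \<subseteq> S" "f X = Max (f ` Pow S)" by auto
  have mx: "f Y \<le> f X" if "Y \<subseteq> S" for Y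
    using that X(2) \<open>finite (f ` Pow S)\<close> by (simp add: Max_ge)
  show ?thesis
  proof (intro exI ballI, rule ccontr)
    fix v assume v: "v \<in> S" and c: "\<not> deg R S v \<le> 2 * deg (cut_edges R X) S v"
    have "X - {v} \<union> ({v} - X) \<subseteq> S" using X(1) v by auto
    hence "f (X - {v} \<union> ({v} - X)) \<le> f X" by (rule mx)
    with sum_cut_deg_flip[OF fin sym no_loop v, of X] c show False unfolding f_def by linarith
  qed
qed

lemma exists_bipartite_min_degree_subgraph:
  fixes t :: real
  assumes sym: "\<forall>u w. E u w \<longrightarrow> E w u" and irr: "\<forall>u. \<not> E u u" and fin: "finite V"
    and avg: "real (\<Sum>v\<in>V. deg E V v) > 2 * (2 * t) * real (card V)"
  shows "\<exists>W X. W \<subseteq> V \<and> W \<noteq> {}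
    \<and> (\<forall>v\<in>W. t \<le> real (deg (\<lambda>u w. u \<in> W \<and> w \<in> W \<and> cut_edges E X u w) W v))"
proof -
  obtain W where W: "W \<subseteq> V" "W \<noteq> {}" "\<forall>v\<in>W. real (deg E W v) > 2 * t"
    using exists_min_degree_subgraph[OF fin sym irr avg] by auto
  have finW: "finite W" using W(1) fin finite_subset by blast
  obtain X where X: "\<forall>v\<in>W. deg E W v \<le> 2 * deg (cut_edges E X) W v"
    using exists_half_degree_cut[OF finW sym irr] by blast
  have "t \<le> real (deg (\<lambda>u w. u \<in> W \<and> w \<in> W \<and> cut_edges E X u w) W v)" if v: "v \<in> W" for v
  proof -
    have "deg (\<lambda>u w. u \<in> W \<and> w \<in> W \<and> cut_edges E X u w) W v = deg (cut_edges E X) W v"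
      unfolding deg_def using v by simp
    moreover have "real (deg E W v) \<le> 2 * real (deg (cut_edges E X) W v)"
      using X v by (metis of_nat_le_iff of_nat_mult of_nat_numeral)
    moreover have "2 * t < real (deg E W v)" using W(3) v by blast
    ultimately show ?thesis by linarith
  qed
  thus ?thesis using W(1,2) by blast
qed

section \<open>Even cycles with an odd chord\<close>

definition has_cycle :: "(nat \<Rightarrow> nat \<Rightarrow> bool) \<Rightarrow> nat \<Rightarrow> bool" where
  "has_cycle R m \<longleftrightarrow> (\<exists>f. inj_on f {0..<m} \<and> (\<forall>p<m. R (f p) (f (Suc p mod m))))"

lemma contains_cycle_if_has_cycle:
  assumes "has_cycle R m" and "\<And>u w. R u w \<Longrightarrow> E u w \<and> u < n"
  shows "contains_cycle n E m"
proof -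
  obtain f where f: "inj_on f {0..<m}" "\<forall>p<m. R (f p) (f (Suc p mod m))"
    using assms(1) unfolding has_cycle_def by blast
  show ?thesis unfolding contains_cycle_def
  proof (intro exI conjI)
    show "f ` {0..<m} \<subseteq> {0..<n}" using f(2) assms(2) by fastforce
    show "\<forall>i<m. E (f i) (f (Suc i mod m))" using f(2) assms(2) by blast
  qed (rule f(1))
qed

lemma add_mod_inj:
  fixes N a i j :: nat
  assumes "i < N" "j < N" "(a + i) mod N = (a + j) mod N"
  shows "i = j"
proof -
  have "[a + i = a + j] (mod N)" using assms(3) by (simp add: cong_def)
  hence "[i = j] (mod N)" by (simp add: cong_add_lcancel_nat)
  thus ?thesis using assms(1,2) by (simp add: cong_def)
qed

definition index_path :: "(nat \<Rightarrow> nat \<Rightarrow> bool) \<Rightarrow> (nat \<Rightarrow> nat) \<Rightarrow> nat \<Rightarrow> nat \<Rightarrow> nat list \<Rightarrow> bool" where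
  "index_path R c N m qs \<longleftrightarrow> length qs = Suc m \<and> distinct qs \<and> set qs \<subseteq> {..<N}
     \<and> (\<forall>j<m. R (c (qs!j)) (c (qs!Suc j)))"

text \<open>Going once around the cycle and through the chord in both
  directions shows that the colouring is constant on even positions.\<close>
locale chorded_cycle_colouring =
  fixes R :: "nat \<Rightarrow> nat \<Rightarrow> bool" and c :: "nat \<Rightarrow> nat" and N M \<tau> d :: nat
    and col :: "nat \<Rightarrow> bool"
  assumes sym: "\<And>u w. R u w \<Longrightarrow> R w u"
    and N: "N = 2*M"
    and cycle: "\<And>i. i < N \<Longrightarrow> R (c i) (c (Suc i mod N))"
    and chord: "R (c 0) (c (2*\<tau>+1))"
    and d: "1 \<le> d" "d \<le> \<tau>" "\<tau> + d < M"
    and path_colour: "\<And>qs. index_path R c N (2*d) qs \<Longrightarrow> even (qs!0) \<Longrightarrow> even (qs!(2*d))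
       \<Longrightarrow> col (c (qs!0)) = col (c (qs!(2*d)))"
begin

definition even_colour :: "nat \<Rightarrow> bool" where
  "even_colour x = col (c (2*(x mod M)))"

lemma M_pos: "0 < M" using d by simp

lemma cycle_edge: "Suc i < N \<Longrightarrow> R (c i) (c (Suc i))"
  using cycle by (metis Suc_lessD mod_less)

lemma index_path_map:
  assumes "inj_on g {..2*d}" "\<And>j. j \<le> 2*d \<Longrightarrow> g j < N"
    and "\<And>j. j < 2*d \<Longrightarrow> R (c (g j)) (c (g (Suc j)))"
    and "even (g 0)" "even (g (2*d))"
  shows "col (c (g 0)) = col (c (g (2*d)))"
proof -
  define qs where "qs = map g [0..<Suc (2*d)]"
  have nth: "qs ! j = g j" if "j \<le> 2*d" for j
    unfolding qs_def using that by (simp del: upt_Suc)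
  have "index_path R c N (2*d) qs"
    unfolding index_path_def
  proof (intro conjI allI impI)
    show "length qs = Suc (2*d)" unfolding qs_def by simp
    have "set [0..<Suc (2*d)] = {..2*d}" by auto
    thus "distinct qs" unfolding qs_def distinct_map using assms(1) by simp
    show "set qs \<subseteq> {..<N}" unfolding qs_def using assms(2) by auto
    show "R (c (qs!j)) (c (qs!Suc j))" if "j < 2*d" for j using assms(3) that nth by simp
  qed
  thus ?thesis using path_colour[of qs] nth assms(4,5) by simp
qed

lemma even_colour_add_d: "even_colour (x + d) = even_colour x"
proof -
  define a where "a = x mod M"
  have a: "a < M" unfolding a_def using M_pos by simp
  have ends: "(2*a + 0) mod N = 2*a" "(2*a + 2*d) mod N = 2*((x + d) mod M)"
  proof -
    show "(2*a + 0) mod N = 2*a" using a N by simp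
    have "(2*a + 2*d) mod N = 2*((a + d) mod M)" unfolding N by (simp add: mult_mod_right)
    also have "(a + d) mod M = (x + d) mod M" unfolding a_def by (simp add: mod_add_left_eq)
    finally show "(2*a + 2*d) mod N = 2*((x + d) mod M)" .
  qed
  have "col (c ((2*a + 0) mod N)) = col (c ((2*a + 2*d) mod N))"
  proof (rule index_path_map)
    show "inj_on (\<lambda>j. (2*a + j) mod N) {..2*d}"
    proof (rule inj_onI)
      fix i j assume "i \<in> {..2*d}" "j \<in> {..2*d}" "(2*a + i) mod N = (2*a + j) mod N"
      moreover have "i < N" "j < N" using calculation(1,2) d N by auto
      ultimately show "i = j" using add_mod_inj by blast
    qed
    show "(2*a + j) mod N < N" for j using M_pos N by simp
    show "R (c ((2*a + j) mod N)) (c ((2*a + Suc j) mod N))" for j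
    proof -
      have "R (c ((2*a + j) mod N)) (c (Suc ((2*a + j) mod N) mod N))"
        using cycle M_pos N by simp
      thus ?thesis by (simp add: mod_Suc_eq)
    qed
  qed (simp_all only: ends even_mult_iff even_numeral simp_thms)
  hence "col (c (2*a)) = col (c (2*((x + d) mod M)))" by (simp only: ends)
  thus ?thesis unfolding even_colour_def a_def by simp
qed

lemma even_colour_add_M: "even_colour (x + M) = even_colour x"
  unfolding even_colour_def by simp

lemma even_colour_chord_backward:
  assumes s: "s < d"
  shows "even_colour s = even_colour (\<tau>+1-d+s)"
proof -
  define g where "g j = (if j \<le> 2*s then 2*s - j else 2*\<tau> + 2*s + 2 - j)" for j
  have g_ends: "g 0 = 2*s" "g (2*d) = 2*(\<tau>+1-d+s)" unfolding g_def using s d by auto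
  have "col (c (g 0)) = col (c (g (2*d)))"
  proof (rule index_path_map)
    show "inj_on g {..2*d}" unfolding g_def
      by (rule inj_onI) (use s d in \<open>auto split: if_splits\<close>)
    show "g j < N" if "j \<le> 2*d" for j unfolding g_def using d s N that by auto
    show "R (c (g j)) (c (g (Suc j)))" if j: "j < 2*d" for j
    proof -
      consider "j < 2*s" | "j = 2*s" | "j > 2*s" by linarith
      thus ?thesis
      proof cases
        case 1
        have "R (c (Suc (2*s - Suc j))) (c (2*s - Suc j))"
          by (rule sym, rule cycle_edge) (use 1 d N s in auto)
        moreover have "Suc (2*s - Suc j) = 2*s - j" using 1 by simp
        ultimately show ?thesis using 1 unfolding g_def by simp
      next
        case 2
        thus ?thesis using chord unfolding g_def by simp
      next
        case 3
        have "R (c (Suc (2*\<tau> + 2*s + 1 - j))) (c (2*\<tau> + 2*s + 1 - j))"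
          by (rule sym, rule cycle_edge) (use 3 d N s j in auto)
        moreover have "Suc (2*\<tau> + 2*s + 1 - j) = 2*\<tau> + 2*s + 2 - j" using 3 j d s by simp
        ultimately show ?thesis using 3 unfolding g_def by simp
      qed
    qed
  qed (simp_all add: g_ends)
  moreover have "s < M" "\<tau>+1-d+s < M" using s d by auto
  ultimately show ?thesis unfolding even_colour_def using g_ends by simp
qed

lemma even_colour_chord_forward:
  assumes s: "s < d"
  shows "even_colour (M - s) = even_colour (\<tau>+d-s)"
proof -
  define g where "g j = (if j \<le> 2*s then (N - 2*s + j) mod N else 2*\<tau> + j - 2*s)" for j
  have lt: "2*s < N" using s d N by simp
  have first: "(N - 2*s + j) mod N = (if j < 2*s then N - 2*s + j else 0)" if "j \<le> 2*s" for j
    using that lt by auto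
  have g_ends: "g 0 = 2*((M - s) mod M)" "g (2*d) = 2*(\<tau>+d-s)"
    using lt N s d unfolding g_def by (cases "s = 0"; auto)+
  have "col (c (g 0)) = col (c (g (2*d)))"
  proof (rule index_path_map)
    show "inj_on g {..2*d}"
    proof (rule inj_onI)
      fix i j assume "i \<in> {..2*d}" "j \<in> {..2*d}" "g i = g j"
      thus "i = j" using first[of i] first[of j] lt d s N unfolding g_def by (auto split: if_splits)
    qed
    show "g j < N" if "j \<le> 2*d" for j unfolding g_def using d s N that by auto
    show "R (c (g j)) (c (g (Suc j)))" if j: "j < 2*d" for j
    proof -
      consider "j < 2*s" | "j = 2*s" | "j > 2*s" by linarith
      thus ?thesis
      proof cases
        case 1
        have "R (c (N - 2*s + j)) (c (Suc (N - 2*s + j) mod N))" using cycle 1 lt by simp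
        moreover have "Suc (N - 2*s + j) mod N = (N - 2*s + Suc j) mod N" using 1 lt by simp
        ultimately show ?thesis using 1 lt unfolding g_def by simp
      next
        case 2
        thus ?thesis using chord lt unfolding g_def by simp
      next
        case 3
        have "R (c (2*\<tau> + j - 2*s)) (c (Suc (2*\<tau> + j - 2*s)))"
          by (rule cycle_edge) (use 3 d N s j in auto)
        moreover have "Suc (2*\<tau> + j - 2*s) = 2*\<tau> + Suc j - 2*s" using 3 by simp
        ultimately show ?thesis using 3 unfolding g_def by simp
      qed
    qed
  qed (simp_all add: g_ends)
  moreover have "\<tau>+d-s < M" using s d by auto
  ultimately show ?thesis unfolding even_colour_def using g_ends by simp
qed

lemma even_colour_Suc:
  assumes s: "s < d"
  shows "even_colour (Suc s) = even_colour s"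
proof -
  have "even_colour s = even_colour (\<tau>+1-d+s + d)"
    using even_colour_chord_backward[OF s] even_colour_add_d by simp
  also have "\<tau>+1-d+s + d = \<tau>+d-(d-1-s)" using s d by simp
  also have "even_colour \<dots> = even_colour (M - (d-1-s))"
    using even_colour_chord_forward[of "d-1-s"] s by simp
  also have "\<dots> = even_colour (Suc s + M)"
    using even_colour_add_d[of "M - (d-1-s)"] s d by (simp add: add.commute)
  finally show ?thesis using even_colour_add_M[of "Suc s"] by simp
qed

lemma even_colour_const: "even_colour x = even_colour 0"
proof (induction x rule: less_induct)
  case (less x)
  show ?case
  proof (cases "x \<le> d")
    case True
    show ?thesis
    proof (cases x)
      case (Suc y)
      hence "even_colour x = even_colour y" using True even_colour_Suc[of y] by simp
      also have "\<dots> = even_colour 0" using less Suc by blast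
      finally show ?thesis .
    qed simp
  next
    case False
    hence "x = (x - d) + d" by simp
    hence "even_colour x = even_colour (x - d)" using even_colour_add_d by metis
    also have "\<dots> = even_colour 0" by (rule less) (use d False in simp)
    finally show ?thesis .
  qed
qed

theorem even_positions_monochromatic: "s < M \<Longrightarrow> col (c (2*s)) = col (c 0)"
  using even_colour_const[of s] by (simp add: even_colour_def)

end

lemma deg_le_card_neighbour_positions:
  assumes "\<forall>w\<in>W. R (ps!0) w \<longrightarrow> w \<in> set ps"
  shows "deg R W (ps!0) \<le> card {j. j < length ps \<and> R (ps!0) (ps!j)}"
proof -
  have "{w\<in>W. R (ps!0) w} \<subseteq> (\<lambda>j. ps!j) ` {j. j < length ps \<and> R (ps!0) (ps!j)}"
    using assms by (auto simp: in_set_conv_nth)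
  hence "deg R W (ps!0) \<le> card ((\<lambda>j. ps!j) ` {j. j < length ps \<and> R (ps!0) (ps!j)})"
    unfolding deg_def by (intro card_mono) auto
  also have "\<dots> \<le> card {j. j < length ps \<and> R (ps!0) (ps!j)}" by (rule card_image_le) simp
  finally show ?thesis .
qed

lemma exists_odd_member_far_from_ends:
  fixes J :: "nat set" and l :: nat
  assumes fin: "finite J" and odd: "\<forall>j\<in>J. odd j" and cJ: "2*l - 1 \<le> card J" and l: "2 \<le> l"
  shows "\<exists>t\<in>J. 2*l - 1 \<le> t \<and> t + (2*l - 2) \<le> Max J"
proof -
  define Jm where "Jm = Max J"
  have Jne: "J \<noteq> {}" using cJ l by auto
  have JmJ: "Jm \<in> J" unfolding Jm_def using fin Jne by simp
  define B1 where "B1 = (\<lambda>r. 2*r+1) ` {..<l-1}"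
  define B2 where "B2 = (\<lambda>r. Jm - 2*r) ` {..<l-1}"
  have c1: "card B1 \<le> l - 1" unfolding B1_def using card_image_le[of "{..<l-1}"] by simp
  have c2: "card B2 \<le> l - 1" unfolding B2_def using card_image_le[of "{..<l-1}"] by simp
  have fB: "finite (B1 \<union> B2)" unfolding B1_def B2_def by simp
  have "card J \<le> card ((J - (B1 \<union> B2)) \<union> (B1 \<union> B2))" by (rule card_mono) (use fin fB in auto)
  also have "\<dots> \<le> card (J - (B1 \<union> B2)) + card (B1 \<union> B2)" by (rule card_Un_le)
  finally have "card J \<le> card (J - (B1 \<union> B2)) + card (B1 \<union> B2)" .
  moreover have "card (B1 \<union> B2) \<le> 2*l - 2" using card_Un_le[of B1 B2] c1 c2 by simp
  ultimately have "card (J - (B1 \<union> B2)) > 0" using cJ l by simp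
  hence "J - (B1 \<union> B2) \<noteq> {}" by (metis card.empty less_irrefl)
  then obtain t where t: "t \<in> J" "t \<notin> B1" "t \<notin> B2" by blast
  have tle: "t \<le> Jm" unfolding Jm_def using fin t(1) by simp
  have "2*l - 1 \<le> t"
  proof (rule ccontr)
    assume "\<not> 2*l - 1 \<le> t"
    moreover obtain r where "t = 2*r+1" using odd t(1) by (metis oddE)
    ultimately have "r < l - 1" by simp
    hence "t \<in> B1" unfolding B1_def using \<open>t = 2*r+1\<close> by auto
    thus False using t by simp
  qed
  moreover have "t + (2*l - 2) \<le> Jm"
  proof (rule ccontr)
    assume a: "\<not> t + (2*l - 2) \<le> Jm"
    have "even (Jm - t)" using odd t(1) JmJ tle by auto
    then obtain r where r: "Jm - t = 2*r" by (elim evenE)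
    have "r < l - 1" using a r tle by simp
    moreover have "t = Jm - 2*r" using r tle by simp
    ultimately have "t \<in> B2" unfolding B2_def by auto
    thus False using t by simp
  qed
  ultimately show ?thesis using t(1) unfolding Jm_def by blast
qed

lemma reversed_cycle:
  assumes sym: "\<And>u w. R u w \<Longrightarrow> R w u" and t: "t < N"
    and inj: "inj_on c {..<N}" and cyc: "\<forall>j<N. R (c j) (c (Suc j mod N))" and chord: "R (c 0) (c t)"
  defines "c' \<equiv> \<lambda>j. c ((t + N - j) mod N)"
  shows "inj_on c' {..<N}" "\<forall>j<N. R (c' j) (c' (Suc j mod N))" "R (c' 0) (c' t)"
proof -
  have idx: "t + N - j = (t + 1) + (N - 1 - j)" if "j < N" for j using that by simp
  have cN: "(t + N - j) mod N < N" for j using t by simp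
  show "inj_on c' {..<N}"
  proof (rule inj_onI)
    fix j j' assume j: "j \<in> {..<N}" and j': "j' \<in> {..<N}" and "c' j = c' j'"
    hence "(t + N - j) mod N = (t + N - j') mod N"
      using inj cN unfolding c'_def by (auto dest: inj_onD)
    hence "((t + 1) + (N - 1 - j)) mod N = ((t + 1) + (N - 1 - j')) mod N" using idx j j' by simp
    hence "N - 1 - j = N - 1 - j'" by (rule add_mod_inj[rotated 2]) (use j j' in auto)
    thus "j = j'" using j j' by simp
  qed
  show "\<forall>j<N. R (c' j) (c' (Suc j mod N))"
  proof (intro allI impI)
    fix j assume j: "j < N"
    show "R (c' j) (c' (Suc j mod N))"
    proof (cases "Suc j < N")
      case True
      define q where "q = (t + N - Suc j) mod N"
      have "Suc q mod N = Suc (t + N - Suc j) mod N" unfolding q_def by (simp add: mod_Suc_eq)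
      also have "Suc (t + N - Suc j) = t + N - j" using j True by simp
      finally have "R (c' (Suc j)) (c' j)" using cyc cN[of "Suc j"] unfolding c'_def q_def by metis
      thus ?thesis using True sym by simp
    next
      case False
      hence "Suc j = N" using j by simp
      hence "c' j = c (Suc t mod N)" "Suc j mod N = 0" unfolding c'_def by auto
      moreover have "c' 0 = c t" unfolding c'_def using t by simp
      ultimately show ?thesis using cyc t sym by metis
    qed
  qed
  have "c' 0 = c t" "c' t = c 0" unfolding c'_def using t by simp_all
  thus "R (c' 0) (c' t)" using chord sym by metis
qed

section \<open>Breadth-first search in a bipartite graph\<close>

primrec within_dist :: "(nat \<Rightarrow> nat \<Rightarrow> bool) \<Rightarrow> nat \<Rightarrow> nat \<Rightarrow> nat set" where
  "within_dist F x 0 = {x}"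
| "within_dist F x (Suc i) = within_dist F x i \<union> {w. \<exists>u\<in>within_dist F x i. F u w}"

locale bipartite_bfs =
  fixes F :: "nat \<Rightarrow> nat \<Rightarrow> bool" and x :: nat and X :: "nat set"
  assumes sym: "\<And>u w. F u w \<Longrightarrow> F w u"
    and bip: "\<And>u w. F u w \<Longrightarrow> (u \<in> X \<longleftrightarrow> w \<notin> X)"
begin

definition reached :: "nat \<Rightarrow> bool" where
  "reached v \<longleftrightarrow> (\<exists>i. v \<in> within_dist F x i)"

definition level :: "nat \<Rightarrow> nat" where
  "level v = (LEAST i. v \<in> within_dist F x i)"

definition parent :: "nat \<Rightarrow> nat" where
  "parent v = (SOME u. reached u \<and> level u = level v - 1 \<and> F u v)"

definition ancestor :: "nat \<Rightarrow> nat \<Rightarrow> nat" where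
  "ancestor j v = (parent ^^ (level v - j)) v"

lemma no_loop: "\<not> F u u"
  using bip by blast

lemma level_mem: "reached v \<Longrightarrow> v \<in> within_dist F x (level v)"
  unfolding reached_def level_def by (metis LeastI)

lemma level_le: "v \<in> within_dist F x i \<Longrightarrow> level v \<le> i"
  unfolding level_def by (rule Least_le)

lemma reached_root: "reached x"
  unfolding reached_def by (metis within_dist.simps(1) singletonI)

lemma level_root: "level x = 0"
  using level_le[of x 0] by simp

lemma eq_root_if_level_0: "reached v \<Longrightarrow> level v = 0 \<Longrightarrow> v = x"
  using level_mem[of v] by simp

lemma reached_edge:
  assumes "reached v" "F v w"
  shows "reached w" "level w \<le> Suc (level v)"
proof -
  have h: "w \<in> within_dist F x (Suc (level v))" using level_mem[OF assms(1)] assms(2) by auto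
  show "reached w" unfolding reached_def using h by blast
  show "level w \<le> Suc (level v)" by (rule level_le[OF h])
qed

lemma level_edge_ge:
  assumes "reached v" "F v w"
  shows "level v \<le> Suc (level w)"
  using reached_edge(2)[OF reached_edge(1)[OF assms] sym[OF assms(2)]] by simp

lemma exists_parent:
  assumes "reached v" "level v \<noteq> 0"
  shows "\<exists>u. reached u \<and> level u = level v - 1 \<and> F u v"
proof -
  obtain j where j: "level v = Suc j" using assms(2) by (cases "level v") auto
  have "v \<in> within_dist F x (Suc j)" using level_mem[OF assms(1)] j by simp
  moreover have "v \<notin> within_dist F x j" using level_le[of v j] j by auto
  ultimately obtain u where u: "u \<in> within_dist F x j" "F u v" by auto
  have r: "reached u" using u(1) unfolding reached_def by auto
  have "level u \<le> j" using level_le[OF u(1)] .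
  moreover have "level v \<le> Suc (level u)" using reached_edge(2)[OF r u(2)] .
  ultimately have "level u = j" using j by simp
  thus ?thesis using r u j by auto
qed

lemma parent_props:
  assumes "reached v" "level v \<noteq> 0"
  shows "reached (parent v)" "level (parent v) = level v - 1" "F (parent v) v"
proof -
  have "reached (parent v) \<and> level (parent v) = level v - 1 \<and> F (parent v) v"
    unfolding parent_def using someI_ex[OF exists_parent[OF assms]] .
  thus "reached (parent v)" "level (parent v) = level v - 1" "F (parent v) v" by auto
qed

lemma funpow_parent:
  "reached v \<Longrightarrow> n \<le> level v \<Longrightarrow> reached ((parent ^^ n) v) \<and> level ((parent ^^ n) v) = level v - n"
proof (induction n)
  case 0 thus ?case by simp
next
  case (Suc n)
  hence ih: "reached ((parent ^^ n) v)" "level ((parent ^^ n) v) = level v - n" by auto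
  have "level ((parent ^^ n) v) \<noteq> 0" using ih(2) Suc.prems by simp
  thus ?case using parent_props[OF ih(1)] ih(2) by simp
qed

lemma reached_ancestor: "reached v \<Longrightarrow> j \<le> level v \<Longrightarrow> reached (ancestor j v)"
  unfolding ancestor_def using funpow_parent by simp

lemma level_ancestor: "reached v \<Longrightarrow> j \<le> level v \<Longrightarrow> level (ancestor j v) = j"
  unfolding ancestor_def using funpow_parent[of v "level v - j"] by simp

lemma ancestor_level_self: "ancestor (level v) v = v"
  unfolding ancestor_def by simp

lemma ancestor_edge:
  assumes "reached v" "j < level v"
  shows "F (ancestor j v) (ancestor (Suc j) v)"
proof -
  have e: "level v - j = Suc (level v - Suc j)" using assms(2) by simp
  have "ancestor j v = parent (ancestor (Suc j) v)" unfolding ancestor_def e by simp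
  moreover have "level (ancestor (Suc j) v) \<noteq> 0"
    using level_ancestor[OF assms(1), of "Suc j"] assms(2) by simp
  ultimately show ?thesis using parent_props(3)[OF reached_ancestor[OF assms(1)]] assms(2) by simp
qed

lemma ancestor_ancestor:
  assumes "reached v" "j \<le> j'" "j' \<le> level v"
  shows "ancestor j (ancestor j' v) = ancestor j v"
proof -
  have l: "level (ancestor j' v) = j'" using level_ancestor[OF assms(1,3)] .
  have "ancestor j (ancestor j' v) = (parent ^^ (j' - j)) (ancestor j' v)"
    unfolding ancestor_def[of j] l ..
  also have "\<dots> = (parent ^^ (j' - j)) ((parent ^^ (level v - j')) v)" unfolding ancestor_def ..
  also have "\<dots> = (parent ^^ (j' - j + (level v - j'))) v" by (simp add: funpow_add)
  also have "j' - j + (level v - j') = level v - j" using assms by simp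
  finally show ?thesis unfolding ancestor_def .
qed

lemma ancestor_0: "reached v \<Longrightarrow> ancestor 0 v = x"
  using eq_root_if_level_0[OF reached_ancestor level_ancestor] by simp

lemma level_parity: "reached v \<Longrightarrow> (v \<in> X \<longleftrightarrow> (x \<in> X \<longleftrightarrow> even (level v)))"
proof (induction "level v" arbitrary: v)
  case 0
  hence "v = x" using eq_root_if_level_0 by simp
  thus ?case using 0 by simp
next
  case (Suc n)
  have l: "level (parent v) = n" "reached (parent v)" "F (parent v) v"
    using parent_props[OF Suc.prems] Suc.hyps(2) by auto
  have "parent v \<in> X \<longleftrightarrow> (x \<in> X \<longleftrightarrow> even n)"
    using Suc.hyps(1)[OF l(1)[symmetric] l(2)] l(1) by simp
  thus ?case using bip[OF l(3)] Suc.hyps(2)[symmetric] by auto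
qed

lemma level_edge:
  assumes "reached v" "F v w"
  shows "level w = Suc (level v) \<or> level v = Suc (level w)"
proof -
  have rw: "reached w" using reached_edge[OF assms] by simp
  have "level w \<noteq> level v"
    using level_parity[OF assms(1)] level_parity[OF rw] bip[OF assms(2)] by auto
  thus ?thesis using reached_edge(2)[OF assms] level_edge_ge[OF assms] by linarith
qed

end

text \<open>Two vertices \<open>p 0\<close>, \<open>p m\<close> on level \<open>i\<close> whose tree paths to the root merge exactly at
  level \<open>h\<close>, joined by a path that never drops below level \<open>i\<close>: the two tree branches and
  the path form a cycle of length \<open>2(i - h) + m\<close>.\<close>
locale branching_path = bipartite_bfs +
  fixes h i m :: nat and p :: "nat \<Rightarrow> nat"
  assumes h_less: "h < i"
    and path_inj: "inj_on p {..m}"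
    and path_edge: "\<And>j. j < m \<Longrightarrow> F (p j) (p (Suc j))"
    and path_reached: "\<And>j. j \<le> m \<Longrightarrow> reached (p j)"
    and path_level: "\<And>j. j \<le> m \<Longrightarrow> i \<le> level (p j)"
    and end_levels: "level (p 0) = i" "level (p m) = i"
    and common_ancestor: "ancestor h (p 0) = ancestor h (p m)"
    and branches: "ancestor (Suc h) (p 0) \<noteq> ancestor (Suc h) (p m)"
begin

definition closing_cycle :: "nat \<Rightarrow> nat" where
  "closing_cycle q = (if q < i - h then ancestor (h + q) (p 0)
     else if q \<le> i - h + m then p (q - (i - h))
     else ancestor (i - (q - (i - h + m))) (p m))"

lemma closing_cycle_first:
  assumes "q < i - h"
  shows "closing_cycle q = ancestor (h + q) (p 0)" "level (closing_cycle q) = h + q"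
  using assms level_ancestor[OF path_reached] end_levels
  unfolding closing_cycle_def by auto

lemma closing_cycle_path:
  assumes "i - h \<le> q" "q \<le> i - h + m"
  shows "closing_cycle q = p (q - (i - h))" "i \<le> level (closing_cycle q)"
  using assms path_level unfolding closing_cycle_def by auto

lemma closing_cycle_last:
  assumes "i - h + m < q" "q < 2*(i - h) + m"
  shows "closing_cycle q = ancestor (i - (q - (i - h + m))) (p m)"
    "level (closing_cycle q) = i - (q - (i - h + m))"
    "h < i - (q - (i - h + m))" "i - (q - (i - h + m)) < i"
  using assms level_ancestor[OF path_reached] end_levels
  unfolding closing_cycle_def by auto

text \<open>A vertex on both branches, at a level above \<open>h\<close>, would merge the branches below it.\<close>
lemma closing_cycle_branches_disjoint:
  assumes q: "q < i - h" and q': "i - h + m < q'" "q' < 2*(i - h) + m"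
  shows "closing_cycle q \<noteq> closing_cycle q'"
proof
  assume eq: "closing_cycle q = closing_cycle q'"
  define j where "j = h + q"
  have j: "j = i - (q' - (i - h + m))"
    using closing_cycle_first(2)[OF q] closing_cycle_last(2)[OF q'] eq unfolding j_def by metis
  have hj: "Suc h \<le> j" using j closing_cycle_last(3)[OF q'] by simp
  have ji: "j \<le> i" unfolding j_def using q by simp
  have "ancestor j (p 0) = closing_cycle q"
    using closing_cycle_first(1)[OF q] unfolding j_def by simp
  also have "\<dots> = closing_cycle q'" by (rule eq)
  also have "\<dots> = ancestor j (p m)" using closing_cycle_last(1)[OF q'] j by simp
  finally have "ancestor (Suc h) (ancestor j (p 0)) = ancestor (Suc h) (ancestor j (p m))" by simp
  thus False
    using ancestor_ancestor[OF path_reached hj] ji end_levels branches by simp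
qed

lemma inj_on_closing_cycle: "inj_on closing_cycle {0..<2*(i - h) + m}"
proof (rule inj_onI)
  fix q q' assume "q \<in> {0..<2*(i - h) + m}" "q' \<in> {0..<2*(i - h) + m}"
    and eq: "closing_cycle q = closing_cycle q'"
  hence ql: "q < 2*(i - h) + m" "q' < 2*(i - h) + m" by auto
  have on_path: "q = q'" if "i - h \<le> q" "q \<le> i - h + m" "i - h \<le> q'" "q' \<le> i - h + m"
    and "closing_cycle q = closing_cycle q'" for q q'
  proof -
    have "p (q - (i - h)) = p (q' - (i - h))" using that closing_cycle_path(1) by metis
    moreover have "q - (i - h) \<in> {..m}" "q' - (i - h) \<in> {..m}" using that by auto
    ultimately have "q - (i - h) = q' - (i - h)" using path_inj by (blast dest: inj_onD)
    thus ?thesis using that by linarith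
  qed
  have off_path: "level (closing_cycle q) < i"
    if "q < 2*(i - h) + m" "\<not> (i - h \<le> q \<and> q \<le> i - h + m)" for q
    using that closing_cycle_first(2)[of q] closing_cycle_last(2,4)[of q] h_less
      by (cases "q < i - h") auto
  consider "i - h \<le> q \<and> q \<le> i - h + m" "i - h \<le> q' \<and> q' \<le> i - h + m"
    | "i - h \<le> q \<and> q \<le> i - h + m" "\<not> (i - h \<le> q' \<and> q' \<le> i - h + m)"
    | "\<not> (i - h \<le> q \<and> q \<le> i - h + m)" "i - h \<le> q' \<and> q' \<le> i - h + m"
    | "q < i - h" "q' < i - h" | "q < i - h" "i - h + m < q'" | "i - h + m < q" "q' < i - h"
    | "i - h + m < q" "i - h + m < q'"
    by linarith
  thus "q = q'"
  proof cases
    case 1 thus ?thesis using on_path eq by blast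
  next
    case 2 thus ?thesis using off_path[of q'] closing_cycle_path(2)[of q] ql eq by simp
  next
    case 3 thus ?thesis using off_path[of q] closing_cycle_path(2)[of q'] ql eq by simp
  next
    case 4 thus ?thesis using closing_cycle_first(2) eq by (metis add_left_cancel)
  next
    case 5 thus ?thesis using closing_cycle_branches_disjoint ql eq by blast
  next
    case 6 thus ?thesis using closing_cycle_branches_disjoint ql eq by metis
  next
    case 7
    define X where "X = i - h + m"
    have "i - (q - X) = i - (q' - X)"
      using closing_cycle_last(2) ql eq 7 unfolding X_def by metis
    moreover have "q - X < i" using ql(1) h_less unfolding X_def by linarith
    moreover have "q' - X < i" using ql(2) h_less unfolding X_def by linarith
    ultimately have "q - X = q' - X" by (metis diff_diff_cancel less_imp_le)
    thus ?thesis using 7 unfolding X_def by (metis le_add_diff_inverse2 less_imp_le)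
  qed
qed

lemma closing_cycle_edge_first:
  assumes q: "Suc q \<le> i - h"
  shows "F (closing_cycle q) (closing_cycle (Suc q))"
proof -
  have "F (ancestor (h + q) (p 0)) (ancestor (Suc (h + q)) (p 0))"
    by (rule ancestor_edge[OF path_reached]) (use q end_levels in simp_all)
  moreover have "closing_cycle (Suc q) = ancestor (Suc (h + q)) (p 0)"
  proof (cases "Suc q = i - h")
    case True
    hence "Suc (h + q) = i" using h_less by simp
    thus ?thesis
      using True closing_cycle_path(1)[of "Suc q"] ancestor_level_self[of "p 0"] end_levels by simp
  qed (use q closing_cycle_first(1)[of "Suc q"] in simp)
  ultimately show ?thesis using closing_cycle_first(1)[of q] q by simp
qed

lemma closing_cycle_edge_path:
  assumes q: "i - h \<le> q" "q < i - h + m"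
  shows "F (closing_cycle q) (closing_cycle (Suc q))"
proof -
  have "F (p (q - (i - h))) (p (Suc (q - (i - h))))" by (rule path_edge) (use q in linarith)
  moreover have "Suc (q - (i - h)) = Suc q - (i - h)" using q by arith
  ultimately show ?thesis
    using closing_cycle_path(1)[of q] closing_cycle_path(1)[of "Suc q"] q by simp
qed

lemma closing_cycle_edge_last:
  assumes q: "i - h + m \<le> q" "q < 2*(i - h) + m"
  shows "F (closing_cycle q) (closing_cycle (Suc q mod (2*(i - h) + m)))"
proof -
  have rb: "reached (p m)" using path_reached by simp
  have root: "closing_cycle 0 = ancestor h (p m)"
    using closing_cycle_first(1)[of 0] h_less common_ancestor by simp
  consider "q = i - h + m" | "i - h + m < q \<and> Suc q < 2*(i - h) + m"
    | "i - h + m < q \<and> Suc q = 2*(i - h) + m"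
    using q by linarith
  thus ?thesis
  proof cases
    case 1
    have last: "closing_cycle q = p m" using closing_cycle_path(1)[of q] 1 by simp
    have "F (ancestor (i - 1) (p m)) (p m)"
      using ancestor_edge[OF rb, of "i - 1"] ancestor_level_self[of "p m"] end_levels h_less by simp
    hence e: "F (p m) (ancestor (i - 1) (p m))" by (rule sym)
    show ?thesis
    proof (cases "i - h = 1")
      case True
      hence "Suc q mod (2*(i - h) + m) = 0" "h = i - 1" using 1 h_less by auto
      thus ?thesis using last e root by simp
    next
      case False
      hence "Suc q < 2*(i - h) + m" using 1 h_less by simp
      moreover from this have "closing_cycle (Suc q) = ancestor (i - 1) (p m)"
        using closing_cycle_last(1)[of "Suc q"] 1 by simp
      ultimately show ?thesis using last e by simp
    qed
  next
    case 2
    define j where "j = i - (Suc q - (i - h + m))"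
    have j1: "i - (q - (i - h + m)) = Suc j" using 2 h_less unfolding j_def by arith
    have "F (ancestor j (p m)) (ancestor (Suc j) (p m))"
      by (rule ancestor_edge[OF rb]) (use j1 end_levels in simp)
    moreover have "closing_cycle q = ancestor (Suc j) (p m)"
      unfolding j1[symmetric] by (rule closing_cycle_last(1)) (use 2 in linarith)+
    moreover have "closing_cycle (Suc q) = ancestor j (p m)"
      unfolding j_def by (rule closing_cycle_last(1)) (use 2 in linarith)+
    ultimately show ?thesis using 2 sym by simp
  next
    case 3
    have "i - (q - (i - h + m)) = Suc h" using 3 by arith
    hence "closing_cycle q = ancestor (Suc h) (p m)" using closing_cycle_last(1)[of q] 3 by simp
    moreover have "F (ancestor h (p m)) (ancestor (Suc h) (p m))"
      by (rule ancestor_edge[OF rb]) (use end_levels h_less in simp)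
    ultimately show ?thesis using 3 sym root by simp
  qed
qed

lemma closing_cycle_edge:
  assumes q: "q < 2*(i - h) + m"
  shows "F (closing_cycle q) (closing_cycle (Suc q mod (2*(i - h) + m)))"
proof -
  consider "Suc q \<le> i - h" | "i - h \<le> q \<and> q < i - h + m" | "i - h + m \<le> q"
    by linarith
  thus ?thesis
  proof cases
    case 1
    moreover have "Suc q < 2*(i - h) + m" using 1 q by linarith
    ultimately show ?thesis using closing_cycle_edge_first by simp
  next
    case 2
    moreover have "Suc q < 2*(i - h) + m" using 2 h_less by linarith
    ultimately show ?thesis using closing_cycle_edge_path by simp
  qed (use closing_cycle_edge_last q in blast)
qed

theorem exists_cycle: "has_cycle F (2*(i - h) + m)"
  unfolding has_cycle_def using inj_on_closing_cycle closing_cycle_edge by blast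

end

context bipartite_bfs begin

lemma exists_branching_level:
  assumes V: "\<And>v. v \<in> V \<Longrightarrow> reached v \<and> level v = i" and z: "z \<in> V"
    and uw: "u \<in> V" "w \<in> V" "u \<noteq> w"
  shows "\<exists>h<i. (\<forall>v\<in>V. ancestor h v = ancestor h z)
    \<and> (\<exists>v\<in>V. ancestor (Suc h) v \<noteq> ancestor (Suc h) z)"
proof -
  define Hs where "Hs = {h. h \<le> i \<and> (\<forall>v\<in>V. ancestor h v = ancestor h z)}"
  have finH: "finite Hs" unfolding Hs_def by (rule finite_subset[of _ "{..i}"]) auto
  define h where "h = Max Hs"
  have "0 \<in> Hs" unfolding Hs_def using V z ancestor_0 by simp
  hence hH: "h \<in> Hs" unfolding h_def using finH by (intro Max_in) auto
  have "h \<noteq> i"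
  proof
    assume "h = i"
    hence "ancestor i u = ancestor i w" using hH uw unfolding Hs_def by simp
    thus False using ancestor_level_self[of u] ancestor_level_self[of w] V uw by simp
  qed
  hence less: "h < i" using hH unfolding Hs_def by simp
  have "Suc h \<notin> Hs" unfolding h_def using finH Max_ge not_less_eq_eq by blast
  hence "\<not> (\<forall>v\<in>V. ancestor (Suc h) v = ancestor (Suc h) z)" using less unfolding Hs_def by simp
  moreover have "\<forall>v\<in>V. ancestor h v = ancestor h z" using hH unfolding Hs_def by simp
  ultimately show ?thesis using less by blast
qed

text \<open>Let \<open>h\<close> be the deepest level on which all vertices at even positions of the cycle
  (all on level \<open>i\<close>) have a common ancestor. Their ancestors on level \<open>h + 1\<close> are not all
  equal, so some path of length \<open>2(l - i + h)\<close> along the cycle and the chord joins two of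
  them with different ancestors there; their branches close it to a cycle of length \<open>2l\<close>.\<close>
lemma cycle_from_chorded_cycle:
  assumes N: "N = 2*M" and inj: "inj_on c {..<N}"
    and cyc: "\<forall>j<N. F (c j) (c (Suc j mod N))" and chord: "F (c 0) (c (2*\<tau>+1))"
    and rc: "\<forall>j<N. reached (c j)" and ev: "\<forall>s<M. level (c (2*s)) = i"
    and ge: "\<forall>j<N. i \<le> level (c j)"
    and i: "1 \<le> i" "i + 1 \<le> l" and tau: "l \<le> \<tau> + 1" "\<tau> + l \<le> M"
  shows "has_cycle F (2*l)"
proof -
  have M3: "3 \<le> M" using i tau by simp
  define V where "V = {c (2*s) | s. s < M}"
  have "(2::nat) \<in> {..<N}" "(0::nat) \<in> {..<N}" using N M3 by auto
  hence "c 2 \<noteq> c 0" using inj by (metis inj_onD zero_neq_numeral)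
  moreover have "c 2 \<in> V" unfolding V_def using M3 by (intro CollectI exI[of _ "1::nat"]) simp
  moreover have "c 0 \<in> V" unfolding V_def using M3 by (intro CollectI exI[of _ "0::nat"]) simp
  moreover have "reached v \<and> level v = i" if "v \<in> V" for v
    using that rc ev N unfolding V_def by auto
  ultimately obtain h where h: "h < i" "\<forall>v\<in>V. ancestor h v = ancestor h (c 0)"
    and "\<exists>v\<in>V. ancestor (Suc h) v \<noteq> ancestor (Suc h) (c 0)"
    using exists_branching_level by metis
  define d where "d = l - i + h"
  define col where "col v = (ancestor (Suc h) v = ancestor (Suc h) (c 0))" for v
  have d: "1 \<le> d" "d \<le> \<tau>" "\<tau> + d < M" using i tau h unfolding d_def by auto
  have "\<not> (\<forall>s<M. col (c (2*s)) = col (c 0))"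
    using \<open>\<exists>v\<in>V. _\<close> unfolding col_def V_def by auto
  hence "\<not> chorded_cycle_colouring F c N M \<tau> d col"
    using chorded_cycle_colouring.even_positions_monochromatic by blast
  then obtain qs where qs: "index_path F c N (2*d) qs" "even (qs!0)" "even (qs!(2*d))"
      "col (c (qs!0)) \<noteq> col (c (qs!(2*d)))"
    unfolding chorded_cycle_colouring_def using sym N cyc chord d by blast
  have qsN: "qs!j < N" if "j \<le> 2*d" for j
  proof -
    have "qs!j \<in> set qs" using qs(1) that unfolding index_path_def by (intro nth_mem) simp
    thus ?thesis using qs(1) unfolding index_path_def by auto
  qed
  have ends_V: "c (qs!0) \<in> V" "c (qs!(2*d)) \<in> V"
    using qs(2,3) qsN[of 0] qsN[of "2*d"] N unfolding V_def by (auto elim!: evenE)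
  interpret branching_path F x X h i "2*d" "\<lambda>j. c (qs!j)"
  proof
    show "inj_on (\<lambda>j. c (qs!j)) {..2*d}"
    proof (rule inj_onI)
      fix j j' assume j: "j \<in> {..2*d}" "j' \<in> {..2*d}" and "c (qs!j) = c (qs!j')"
      hence "qs!j = qs!j'" using qsN inj by (auto dest: inj_onD)
      thus "j = j'" using qs(1) j unfolding index_path_def by (auto simp: nth_eq_iff_index_eq)
    qed
  qed (use h qs ends_V qsN rc ge ev in \<open>auto simp: index_path_def col_def V_def\<close>)
  have "2*(i - h) + 2*d = 2*l" using i h unfolding d_def by simp
  thus ?thesis using exists_cycle by metis
qed

end

context bipartite_bfs begin

lemma exists_maximal_path:
  assumes W: "finite W" "w0 \<in> W"
  shows "\<exists>ps. ps \<noteq> [] \<and> distinct ps \<and> set ps \<subseteq> W \<and> (\<forall>j. Suc j < length ps \<longrightarrow> F (ps!j) (ps!Suc j))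
          \<and> (\<forall>w\<in>W. F (ps!0) w \<longrightarrow> w \<in> set ps)"
proof -
  define P where "P ps \<longleftrightarrow> ps \<noteq> [] \<and> distinct ps \<and> set ps \<subseteq> W
    \<and> (\<forall>j. Suc j < length ps \<longrightarrow> F (ps!j) (ps!Suc j))" for ps
  define Ls where "Ls = length ` {ps. P ps}"
  have lenle: "length ps \<le> card W" if "P ps" for ps
    using that unfolding P_def by (metis W(1) card_mono distinct_card)
  have fin: "finite Ls"
    unfolding Ls_def by (rule finite_subset[of _ "{..card W}"]) (auto dest: lenle)
  have "P [w0]" unfolding P_def using W by simp
  hence ne: "Ls \<noteq> {}" unfolding Ls_def by auto
  obtain ps where ps: "P ps" "length ps = Max Ls"
    using Max_in[OF fin ne] unfolding Ls_def by auto
  have mx: "length qs \<le> length ps" if "P qs" for qs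
    using ps(2) fin that unfolding Ls_def by (simp add: Max_ge)
  have "\<forall>w\<in>W. F (ps!0) w \<longrightarrow> w \<in> set ps"
  proof (intro ballI impI, rule ccontr)
    fix w assume w: "w \<in> W" "F (ps!0) w" "w \<notin> set ps"
    have "P (w # ps)" unfolding P_def
    proof (intro conjI allI impI)
      show "distinct (w # ps)" using ps(1) w unfolding P_def by simp
      show "set (w # ps) \<subseteq> W" using ps(1) w unfolding P_def by simp
      fix j assume j: "Suc j < length (w # ps)"
      show "F ((w # ps) ! j) ((w # ps) ! Suc j)"
      proof (cases j)
        case 0 thus ?thesis using w(2) sym by simp
      next
        case (Suc j') thus ?thesis using ps(1) j unfolding P_def by simp
      qed
    qed simp
    thus False using mx[of "w # ps"] by simp
  qed
  thus ?thesis using ps(1) unfolding P_def by blast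
qed

lemma path_alternates:
  assumes "\<forall>j. Suc j < length ps \<longrightarrow> F (ps!j) (ps!Suc j)" "j < length ps"
  shows "ps!j \<in> X \<longleftrightarrow> (ps!0 \<in> X \<longleftrightarrow> even j)"
  using assms(2)
proof (induction j)
  case 0 thus ?case by simp
next
  case (Suc j)
  have "F (ps!j) (ps!Suc j)" using assms(1) Suc.prems by simp
  thus ?case using bip Suc by auto
qed

text \<open>The neighbours of the first vertex of a maximal path all lie on the path, at odd
  positions; closing the path at the last of them gives a cycle with many chords, one of
  which is far from both ends of the cycle.\<close>
lemma exists_chorded_cycle:
  assumes W: "finite W" "W \<noteq> {}" and dg: "\<forall>v\<in>W. 2*l - 1 \<le> deg F W v" and l: "2 \<le> l"
  shows "\<exists>N c t. inj_on c {..<N} \<and> (\<forall>j<N. F (c j) (c (Suc j mod N))) \<and> F (c 0) (c t)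
     \<and> odd t \<and> 2*l - 1 \<le> t \<and> t + 2*l - 1 \<le> N \<and> even N
     \<and> (\<forall>j<N. c j \<in> W \<and> (c j \<in> X \<longleftrightarrow> (c 0 \<in> X \<longleftrightarrow> even j)))"
proof -
  obtain w0 where w0: "w0 \<in> W" using W by auto
  obtain ps where ps: "ps \<noteq> []" "distinct ps" "set ps \<subseteq> W"
      "\<forall>j. Suc j < length ps \<longrightarrow> F (ps!j) (ps!Suc j)"
      "\<forall>w\<in>W. F (ps!0) w \<longrightarrow> w \<in> set ps"
    using exists_maximal_path[OF W(1) w0] by blast
  have psW: "ps!j \<in> W" if "j < length ps" for j using ps(3) nth_mem[OF that] by auto
  define J where "J = {j. j < length ps \<and> F (ps!0) (ps!j)}"
  have finJ: "finite J" unfolding J_def by simp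
  have oddJ: "\<forall>j\<in>J. odd j"
  proof
    fix j assume "j \<in> J"
    hence j: "j < length ps" "F (ps!0) (ps!j)" unfolding J_def by auto
    show "odd j" using path_alternates[OF ps(4) j(1)] bip[OF j(2)] by auto
  qed
  have "2*l - 1 \<le> card J"
    using dg psW[of 0] ps(1) deg_le_card_neighbour_positions[of W F ps] ps(5)
    unfolding J_def by fastforce
  obtain t where t: "t \<in> J" "2*l - 1 \<le> t" "t + (2*l - 2) \<le> Max J"
    using exists_odd_member_far_from_ends[OF finJ oddJ \<open>2*l - 1 \<le> card J\<close> l] by blast
  define N where "N = Suc (Max J)"
  have JmJ: "Max J \<in> J" using finJ t(1) by (metis Max_in empty_iff)
  have Jm: "Max J < length ps" "F (ps!0) (ps!Max J)" "odd (Max J)"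
    using JmJ oddJ unfolding J_def by auto
  have NL: "N \<le> length ps" unfolding N_def using Jm(1) by simp
  show ?thesis
  proof (intro exI conjI allI impI)
    show "inj_on (\<lambda>j. ps!j) {..<N}"
      using ps(2) NL by (intro inj_onI) (simp add: nth_eq_iff_index_eq)
    show "F (ps!j) (ps!(Suc j mod N))" if j: "j < N" for j
    proof (cases "Suc j < N")
      case True thus ?thesis using ps(4) NL by simp
    next
      case False
      hence "j = Max J" using j unfolding N_def by simp
      moreover have "Suc j = N" using False j by simp
      hence "Suc j mod N = 0" by simp
      ultimately show ?thesis using Jm(2) sym by simp
    qed
    show "F (ps!0) (ps!t)" "odd t" using t(1) oddJ unfolding J_def by auto
    show "2*l - 1 \<le> t" by (rule t(2))
    show "t + 2*l - 1 \<le> N" using t(3) l unfolding N_def by simp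
    show "even N" unfolding N_def using Jm(3) by simp
    show "ps!j \<in> W" "ps!j \<in> X \<longleftrightarrow> (ps!0 \<in> X \<longleftrightarrow> even j)" if "j < N" for j
      using psW path_alternates[OF ps(4)] that NL by auto
  qed
qed

text \<open>The chorded cycle alternates between levels \<open>i\<close> and \<open>i + 1\<close>; reversing it if
  necessary puts level \<open>i\<close> on the even positions.\<close>
lemma cycle_in_two_levels:
  assumes W: "finite W" "W \<noteq> {}" and Wl: "\<forall>v\<in>W. reached v \<and> (level v = i \<or> level v = Suc i)"
    and dg: "\<forall>v\<in>W. 2*l - 1 \<le> deg F W v" and i: "1 \<le> i" "i+1 \<le> l"
  shows "has_cycle F (2*l)"
proof -
  obtain N c t where inj: "inj_on c {..<N}" and cyc: "\<forall>j<N. F (c j) (c (Suc j mod N))"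
    and chord: "F (c 0) (c t)" and t: "odd t" "2*l - 1 \<le> t" "t + 2*l - 1 \<le> N" and "even N"
    and cW: "\<forall>j<N. c j \<in> W \<and> (c j \<in> X \<longleftrightarrow> (c 0 \<in> X \<longleftrightarrow> even j))"
    using exists_chorded_cycle[OF W dg] i by auto
  define M where "M = N div 2"
  define \<tau> where "\<tau> = t div 2"
  have NM: "N = 2*M" unfolding M_def using \<open>even N\<close> by simp
  have tau: "t = 2*\<tau>+1" unfolding \<tau>_def using t(1) by simp
  have tau1: "l \<le> \<tau> + 1" "\<tau> + l \<le> M" using t tau NM by auto
  have tN: "t < N" using t i by simp
  have on_levels: "reached (c j)" "i \<le> level (c j)" if "j < N" for j
    using Wl cW that by auto
  have layer: "level (c j) = i \<longleftrightarrow> (even j \<longleftrightarrow> level (c 0) = i)" if "j < N" for j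
  proof -
    have lv: "level v = i \<longleftrightarrow> (v \<in> X \<longleftrightarrow> (x \<in> X \<longleftrightarrow> even i))" if "v \<in> W" for v
      using level_parity[of v] Wl that by auto
    have "0 < N" using tN by simp
    hence "c 0 \<in> W" using cW by blast
    moreover have "c j \<in> W" "c j \<in> X \<longleftrightarrow> (c 0 \<in> X \<longleftrightarrow> even j)" using cW that by blast+
    ultimately show ?thesis using lv[of "c j"] lv[of "c 0"] by blast
  qed
  show ?thesis
  proof (cases "level (c 0) = i")
    case True
    show ?thesis
    proof (rule cycle_from_chorded_cycle[OF NM inj cyc _ _ _ _ i tau1])
      show "F (c 0) (c (2*\<tau>+1))" using chord tau by simp
      show "\<forall>s<M. level (c (2*s)) = i" using layer True NM by simp
    qed (use on_levels in auto)
  next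
    case False
    define c' where "c' = (\<lambda>j. c ((t + N - j) mod N))"
    have cN: "(t + N - j) mod N < N" for j using tN by simp
    show ?thesis
    proof (rule cycle_from_chorded_cycle[OF NM])
      show "inj_on c' {..<N}" "\<forall>j<N. F (c' j) (c' (Suc j mod N))" "F (c' 0) (c' (2*\<tau>+1))"
        using reversed_cycle[OF sym tN inj cyc chord] tau unfolding c'_def by auto
      show "\<forall>s<M. level (c' (2*s)) = i"
      proof (intro allI impI)
        fix s assume s: "s < M"
        have "odd (t + N - 2*s)" using t(1) NM s by auto
        hence "odd ((t + N - 2*s) mod N)" using NM by (simp add: dvd_mod_iff)
        thus "level (c' (2*s)) = i" unfolding c'_def using layer[OF cN] False by simp
      qed
    qed (use on_levels cN i tau1 in \<open>auto simp: c'_def\<close>)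
  qed
qed

end

section \<open>Graphs without \<open>C\<^sub>2\<^sub>l\<close> have few edges\<close>

locale even_cycle_free_bfs = bipartite_bfs +
  fixes S :: "nat set" and l :: nat
  assumes finS: "finite S" and Srest: "\<And>u w. F u w \<Longrightarrow> u \<in> S \<and> w \<in> S" and xS: "x \<in> S"
    and nocyc: "\<not> has_cycle F (2*l)"
    and l2: "2 \<le> l"
begin

definition level_set :: "nat \<Rightarrow> nat set" where "level_set j = {v. reached v \<and> level v = j}"

lemma reached_in_support: "reached v \<Longrightarrow> v \<in> S"
proof -
  assume r: "reached v"
  show "v \<in> S"
  proof (cases "level v = 0")
    case True thus ?thesis using eq_root_if_level_0[OF r] xS by simp
  next
    case False thus ?thesis using parent_props(3)[OF r False] Srest by blast
  qed
qed

lemma level_set_subset: "level_set j \<subseteq> S" unfolding level_set_def using reached_in_support by auto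
lemma finite_level_set: "finite (level_set j)" using finite_subset[OF level_set_subset finS] .
lemma level_set_disjoint: "i \<noteq> j \<Longrightarrow> level_set i \<inter> level_set j = {}" unfolding level_set_def by auto
lemma level_set_0: "level_set 0 = {x}"
  unfolding level_set_def using reached_root level_root eq_root_if_level_0 by auto

definition up_deg :: "nat \<Rightarrow> nat \<Rightarrow> nat" where "up_deg j v = card {w\<in>level_set (Suc j). F v w}"
definition down_deg :: "nat \<Rightarrow> nat \<Rightarrow> nat" where "down_deg j v = card {w\<in>level_set j. F v w}"
definition level_edges :: "nat \<Rightarrow> nat" where "level_edges j = (\<Sum>v\<in>level_set j. up_deg j v)"

lemma level_edges_down: "level_edges j = (\<Sum>w\<in>level_set (Suc j). down_deg j w)"
proof -
  have "level_edges j = (\<Sum>v\<in>level_set j. \<Sum>w\<in>level_set (Suc j). if F v w then 1 else (0::nat))"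
    unfolding level_edges_def up_deg_def using finite_level_set by (simp add: sum.If_cases Int_def)
  also have "\<dots> = (\<Sum>w\<in>level_set (Suc j). \<Sum>v\<in>level_set j. if F v w then 1 else (0::nat))"
    by (rule sum.swap)
  also have "\<dots> = (\<Sum>w\<in>level_set (Suc j). down_deg j w)"
  proof (rule sum.cong[OF refl])
    fix w assume "w \<in> level_set (Suc j)"
    have "(\<Sum>v\<in>level_set j. if F v w then 1 else (0::nat)) = card {v\<in>level_set j. F v w}"
      using finite_level_set by (simp add: sum.If_cases Int_def)
    also have "{v\<in>level_set j. F v w} = {v\<in>level_set j. F w v}" using sym by auto
    finally show "(\<Sum>v\<in>level_set j. if F v w then 1 else (0::nat)) = down_deg j w"
      unfolding down_deg_def .
  qed
  finally show ?thesis .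
qed

lemma deg_level_split:
  assumes v: "v \<in> level_set (Suc j)"
  shows "deg F S v = down_deg j v + up_deg (Suc j) v"
proof -
  have r: "reached v" "level v = Suc j" using v unfolding level_set_def by auto
  have "{w\<in>S. F v w} = {w\<in>level_set j. F v w} \<union> {w\<in>level_set (Suc (Suc j)). F v w}"
  proof
    show "{w\<in>S. F v w} \<subseteq> {w\<in>level_set j. F v w} \<union> {w\<in>level_set (Suc (Suc j)). F v w}"
    proof
      fix w assume "w \<in> {w\<in>S. F v w}"
      hence w: "F v w" by simp
      have "reached w" using reached_edge(1)[OF r(1) w] .
      moreover have "level w = Suc (level v) \<or> level v = Suc (level w)"
        using level_edge[OF r(1) w] .
      ultimately show "w \<in> {w\<in>level_set j. F v w} \<union> {w\<in>level_set (Suc (Suc j)). F v w}"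
        using r w unfolding level_set_def by auto
    qed
  next
    show "{w\<in>level_set j. F v w} \<union> {w\<in>level_set (Suc (Suc j)). F v w} \<subseteq> {w\<in>S. F v w}"
      using level_set_subset by auto
  qed
  moreover have "{w\<in>level_set j. F v w} \<inter> {w\<in>level_set (Suc (Suc j)). F v w} = {}"
    using level_set_disjoint[of j "Suc (Suc j)"] by auto
  ultimately show ?thesis
    unfolding deg_def down_deg_def up_deg_def using finite_level_set by (simp add: card_Un_disjoint)
qed

lemma level_edge_neq: "reached v \<Longrightarrow> F v w \<Longrightarrow> level w \<noteq> level v"
  using level_edge by fastforce

lemma sum_deg_two_levels:
  "(\<Sum>v\<in>level_set i \<union> level_set (Suc i). deg F (level_set i \<union> level_set (Suc i)) v)
     = 2 * level_edges i"
proof -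
  define W where "W = level_set i \<union> level_set (Suc i)"
  have dis: "level_set i \<inter> level_set (Suc i) = {}" using level_set_disjoint by simp
  have d1: "deg F W v = up_deg i v" if "v \<in> level_set i" for v
  proof -
    have rv: "reached v" "level v = i" using that unfolding level_set_def by auto
    have "w \<notin> level_set i" if "F v w" for w
      using level_edge_neq[OF rv(1) that] rv(2) unfolding level_set_def by auto
    hence "{w\<in>W. F v w} = {w\<in>level_set (Suc i). F v w}" unfolding W_def by auto
    thus ?thesis unfolding deg_def up_deg_def by simp
  qed
  have d2: "deg F W v = down_deg i v" if "v \<in> level_set (Suc i)" for v
  proof -
    have rv: "reached v" "level v = Suc i" using that unfolding level_set_def by auto
    have "w \<notin> level_set (Suc i)" if "F v w" for w
      using level_edge_neq[OF rv(1) that] rv(2) unfolding level_set_def by auto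
    hence "{w\<in>W. F v w} = {w\<in>level_set i. F v w}" unfolding W_def by auto
    thus ?thesis unfolding deg_def down_deg_def by simp
  qed
  have "(\<Sum>v\<in>W. deg F W v) = (\<Sum>v\<in>level_set i. deg F W v) + (\<Sum>v\<in>level_set (Suc i). deg F W v)"
    unfolding W_def using finite_level_set dis by (simp add: sum.union_disjoint)
  also have "\<dots> = (\<Sum>v\<in>level_set i. up_deg i v) + (\<Sum>v\<in>level_set (Suc i). down_deg i v)"
    using d1 d2 by simp
  also have "\<dots> = 2 * level_edges i" using level_edges_down[of i] unfolding level_edges_def by simp
  finally show ?thesis unfolding W_def .
qed

text \<open>Otherwise levels \<open>i\<close> and \<open>i + 1\<close> contain a subgraph of minimum degree \<open>2l - 1\<close>.\<close>
lemma level_edges_bound: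
  assumes i: "1 \<le> i" "i + 1 \<le> l"
  shows "level_edges i \<le> (2*l - 2) * (card (level_set i) + card (level_set (Suc i)))"
proof (rule ccontr)
  define W where "W = level_set i \<union> level_set (Suc i)"
  have finW: "finite W" unfolding W_def using finite_level_set by simp
  have "card W = card (level_set i) + card (level_set (Suc i))"
    unfolding W_def using finite_level_set level_set_disjoint by (simp add: card_Un_disjoint)
  moreover assume "\<not> ?thesis"
  ultimately have "2 * (2*l-2) * card W < (\<Sum>v\<in>W. deg F W v)"
    using sum_deg_two_levels[of i] unfolding W_def by simp
  hence "real (\<Sum>v\<in>W. deg F W v) > 2 * real (2*l - 2) * real (card W)"
    by (metis of_nat_less_iff of_nat_mult of_nat_numeral)
  then obtain W' where W': "W' \<subseteq> W" "W' \<noteq> {}" "\<forall>v\<in>W'. real (deg F W' v) > real (2*l - 2)"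
    using exists_min_degree_subgraph[OF finW, of F "real (2*l-2)"] sym no_loop by blast
  have "has_cycle F (2*l)"
  proof (rule cycle_in_two_levels[OF _ W'(2) _ _ i])
    show "finite W'" using finite_subset[OF W'(1) finW] .
    show "\<forall>v\<in>W'. reached v \<and> (level v = i \<or> level v = Suc i)"
      using W'(1) unfolding W_def level_set_def by auto
    show "\<forall>v\<in>W'. 2*l - 1 \<le> deg F W' v" using W'(3) l2 by fastforce
  qed
  thus False using nocyc by blast
qed
end

lemma geometric_growth_of_recurrence:
  fixes a :: "nat \<Rightarrow> real" and K \<delta> :: real
  assumes K: "K > 0" and a0: "a 0 = 1" and a1: "\<delta> \<le> a 1" and d1: "1 \<le> \<delta>"
    and rec: "\<forall>i. 1 \<le> i \<and> i < l \<longrightarrow> \<delta> * a i \<le> K*(a (i-1) + a i) + K*(a i + a (Suc i))"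
    and rho: "2 \<le> \<delta>/K - 2"
  shows "1 \<le> j \<Longrightarrow> j \<le> l \<Longrightarrow> (\<delta>/K - 3)^(j-1) * \<delta> \<le> a j \<and> a (j-1) \<le> a j"
proof (induction j)
  case 0 thus ?case by simp
next
  case (Suc j)
  show ?case
  proof (cases "j = 0")
    case True thus ?thesis using a0 a1 d1 by simp
  next
    case False
    hence IH: "(\<delta>/K - 3)^(j-1) * \<delta> \<le> a j" "a (j-1) \<le> a j" using Suc by auto
    have r: "\<delta> * a j \<le> K*(a (j-1) + a j) + K*(a j + a (Suc j))" using rec Suc.prems False by simp
    have r2: "(\<delta>/K) * a j \<le> a (j-1) + 2 * a j + a (Suc j)"
    proof -
      have "(\<delta>/K) * a j = (\<delta> * a j) / K" by simp
      also have "\<dots> \<le> (K*(a (j-1) + a j) + K*(a j + a (Suc j))) / K"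
        using r K by (simp add: divide_right_mono)
      also have "\<dots> = a (j-1) + 2 * a j + a (Suc j)" using K by (simp add: field_simps)
      finally show ?thesis .
    qed
    have pos: "0 \<le> (\<delta>/K - 3)^(j-1) * \<delta>" using rho d1 by simp
    hence aj0: "0 \<le> a j" using IH by linarith
    have step: "(\<delta>/K - 3) * a j \<le> a (Suc j)"
      using r2 IH(2) by (simp add: algebra_simps)
    have "a j \<le> (\<delta>/K - 3) * a j" using aj0 rho by (simp add: mult_le_cancel_right1) 
    hence m: "a j \<le> a (Suc j)" using step by linarith
    obtain j' where j': "j = Suc j'" using False by (cases j) auto
    have "(\<delta>/K - 3)^j * \<delta> = (\<delta>/K - 3) * ((\<delta>/K - 3)^(j-1) * \<delta>)"
      unfolding j' by simp
    also have "\<dots> \<le> (\<delta>/K - 3) * a j" using IH(1) rho by (simp add: mult_left_mono)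
    finally show ?thesis using step m by simp
  qed
qed

context even_cycle_free_bfs begin

lemma neighbours_root_subset_level_set_1: "{w\<in>S. F x w} \<subseteq> level_set 1"
proof
  fix w assume "w \<in> {w\<in>S. F x w}"
  hence w: "F x w" by simp
  have r: "reached w" using reached_edge(1)[OF reached_root w] .
  have "level w \<le> 1" using reached_edge(2)[OF reached_root w] level_root by simp
  moreover have "level w \<noteq> 0" using eq_root_if_level_0[OF r] w no_loop by auto
  ultimately show "w \<in> level_set 1" unfolding level_set_def using r by simp
qed

lemma level_edges_le:
  assumes "i < l"
  shows "level_edges i \<le> (2*l - 2) * (card (level_set i) + card (level_set (Suc i)))"
proof (cases "i = 0")
  case True
  have "level_edges 0 = up_deg 0 x" unfolding level_edges_def level_set_0 by simp
  also have "\<dots> \<le> card (level_set 1)"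
    unfolding up_deg_def by (rule card_mono[OF finite_level_set]) auto
  also have "\<dots> \<le> 1 * (card (level_set 0) + card (level_set 1))" by simp
  also have "\<dots> \<le> (2*l - 2) * (card (level_set 0) + card (level_set 1))"
    using l2 by (intro mult_le_mono1) simp
  finally show ?thesis using True by simp
next
  case False
  thus ?thesis using level_edges_bound[of i] assms by simp
qed

lemma sum_deg_level_set:
  assumes "1 \<le> i"
  shows "(\<Sum>v\<in>level_set i. deg F S v) = level_edges (i - 1) + level_edges i"
proof -
  obtain j where j: "i = Suc j" using assms by (cases i) auto
  have "(\<Sum>v\<in>level_set i. deg F S v) = (\<Sum>v\<in>level_set i. down_deg j v) + (\<Sum>v\<in>level_set i. up_deg i v)"
    using deg_level_split[of _ j] j by (simp add: sum.distrib)
  thus ?thesis using level_edges_down[of j] j unfolding level_edges_def by simp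
qed

text \<open>Double counting the edges between consecutive levels turns the minimum degree \<open>\<delta>\<close>
  into a recurrence inequality that forces the level sizes to grow geometrically.\<close>
lemma card_level_set_ge:
  fixes \<delta> :: real
  assumes dg: "\<forall>v\<in>S. \<delta> \<le> real (deg F S v)" and rho: "2 \<le> \<delta> / real (2*l-2) - 2"
    and d1: "1 \<le> \<delta>"
  shows "(\<delta>/real (2*l-2) - 3) ^ (l-1) * \<delta> \<le> real (card (level_set l))"
proof -
  define K where "K = real (2*l-2)"
  define a where "a j = real (card (level_set j))" for j
  have K: "K > 0" unfolding K_def using l2 by auto
  have a0: "a 0 = 1" unfolding a_def level_set_0 by simp
  have "deg F S x \<le> card (level_set 1)"
    unfolding deg_def by (rule card_mono[OF finite_level_set neighbours_root_subset_level_set_1])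
  hence a1: "\<delta> \<le> a 1" unfolding a_def using dg xS by force
  have edges: "real (level_edges i) \<le> K * (a i + a (Suc i))" if "i < l" for i
    using level_edges_le[OF that] unfolding K_def a_def by (simp flip: of_nat_add of_nat_mult)
  have rec: "\<forall>i. 1 \<le> i \<and> i < l \<longrightarrow> \<delta> * a i \<le> K*(a (i-1) + a i) + K*(a i + a (Suc i))"
  proof (intro allI impI)
    fix i assume i: "1 \<le> i \<and> i < l"
    have "\<delta> * a i = (\<Sum>v\<in>level_set i. \<delta>)" unfolding a_def by simp
    also have "\<dots> \<le> (\<Sum>v\<in>level_set i. real (deg F S v))"
      by (rule sum_mono) (use dg level_set_subset in blast)
    also have "\<dots> = real (level_edges (i - 1)) + real (level_edges i)"
      using sum_deg_level_set[of i] i by (simp flip: of_nat_sum)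
    also have "\<dots> \<le> K*(a (i-1) + a i) + K*(a i + a (Suc i))"
      using edges[of "i - 1"] edges[of i] i by (simp add: add_mono less_imp_diff_less)
    finally show "\<delta> * a i \<le> K*(a (i-1) + a i) + K*(a i + a (Suc i))" .
  qed
  have "(\<delta>/K - 3)^(l-1) * \<delta> \<le> a l \<and> a (l-1) \<le> a l"
    by (rule geometric_growth_of_recurrence[OF K a0 a1 d1 rec]) (use rho l2 in \<open>auto simp: K_def\<close>)
  thus ?thesis unfolding K_def a_def by simp
qed

end

lemma expansion_exceeds_power:
  fixes q :: real
  assumes k: "2 \<le> k" and q: "12 \<le> q"
  shows "q ^ (k+1) < (5/4 * q - 3) ^ k * (5/2 * real k * q)"
proof -
  have "q ^ k \<le> (5/4 * q - 3) ^ k" using q by (intro power_mono) auto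
  moreover have "q < 5/2 * real k * q" using k q by simp
  moreover have "0 < (5/4 * q - 3) ^ k" using q by simp
  ultimately have "q ^ k * q < (5/4 * q - 3) ^ k * (5/2 * real k * q)"
    using q by (intro mult_le_less_imp_less) auto
  thus ?thesis by (simp add: mult.commute)
qed

lemma sum_deg_le_even_cycle_free:
  fixes n k :: nat and E :: "nat \<Rightarrow> nat \<Rightarrow> bool"
  assumes g: "graph_on n E" and nc: "\<not> contains_cycle n E (2*(k+1))" and k: "2 \<le> k"
    and q: "12 \<le> real n powr (1 / real (k+1))"
  shows "real (\<Sum>v\<in>{..<n}. deg E {..<n} v) \<le> 10 * real k * (real n powr (1/real (k+1))) * real n"
proof (rule ccontr)
  define q where "q = real n powr (1 / real (k+1))"
  define \<delta> where "\<delta> = 5/2 * real k * q"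
  assume "\<not> ?thesis"
  hence "real (\<Sum>v\<in>{..<n}. deg E {..<n} v) > 2 * (2 * \<delta>) * real (card {..<n::nat})"
    unfolding q_def \<delta>_def by simp
  moreover have symE: "\<forall>u w. E u w \<longrightarrow> E w u" and "\<forall>u. \<not> E u u"
    using g unfolding graph_on_def by auto
  ultimately obtain W X where W: "W \<subseteq> {..<n}" "W \<noteq> {}"
    and dg: "\<forall>v\<in>W. \<delta> \<le> real (deg (\<lambda>u w. u \<in> W \<and> w \<in> W \<and> cut_edges E X u w) W v)"
    using exists_bipartite_min_degree_subgraph[of E "{..<n}" \<delta>] by blast
  define F where "F = (\<lambda>u w. u \<in> W \<and> w \<in> W \<and> cut_edges E X u w)"
  have dgF: "\<forall>v\<in>W. \<delta> \<le> real (deg F W v)" using dg unfolding F_def .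
  obtain x where x: "x \<in> W" using W(2) by auto
  have "\<not> has_cycle F (2*(k+1))"
    using nc contains_cycle_if_has_cycle[of F _ E n] W(1) unfolding F_def cut_edges_def by auto
  then interpret B: even_cycle_free_bfs F x X W "k+1"
    using symE finite_subset[OF W(1)] x k unfolding F_def cut_edges_def by unfold_locales auto
  have q12: "12 \<le> q" using q unfolding q_def .
  have kq: "24 \<le> real k * q" using mult_mono[of 2 "real k" 12 q] k q12 by simp
  have rate: "\<delta> / real (2*(k+1) - 2) = 5/4 * q" using k unfolding \<delta>_def by (simp add: field_simps)
  have "(\<delta> / real (2*(k+1) - 2) - 3) ^ (k+1-1) * \<delta> \<le> real (card (B.level_set (k+1)))"
    by (rule B.card_level_set_ge) (use dgF kq q12 k in \<open>auto simp: rate \<delta>_def\<close>)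
  also have "card (B.level_set (k+1)) \<le> n"
    using card_mono[OF _ order.trans[OF B.level_set_subset W(1)]] by simp
  finally have "(5/4 * q - 3) ^ k * (5/2 * real k * q) \<le> real n"
    unfolding rate by (simp add: \<delta>_def)
  moreover have "q ^ (k+1) = real n"
  proof -
    have n0: "0 < n" using W by auto
    have "q ^ (k+1) = q powr real (k+1)"
      by (rule powr_realpow[symmetric]) (use n0 in \<open>simp add: q_def\<close>)
    also have "\<dots> = real n powr (1 / real (k+1) * real (k+1))"
      unfolding q_def by (simp add: powr_powr)
    finally show ?thesis using n0 by simp
  qed
  ultimately show False using expansion_exceeds_power[OF k q12] by simp
qed

section \<open>The complete bipartite graph \<open>K\<^sub>k\<^sub>,\<^sub>n\<^sub>-\<^sub>k\<close>\<close>

definition complete_bipartite :: "nat \<Rightarrow> nat \<Rightarrow> nat \<Rightarrow> nat \<Rightarrow> bool" where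
  "complete_bipartite n k u w \<longleftrightarrow> (u < k \<and> k \<le> w \<and> w < n) \<or> (w < k \<and> k \<le> u \<and> u < n)"

lemma adj_mat_mult_vec_nth:
  assumes "i < n" "x \<in> carrier_vec n"
  shows "(adj_mat n E *\<^sub>v x) $ i = (\<Sum>j \<in> {j\<in>{0..<n}. E i j}. x $ j)"
proof -
  have "(adj_mat n E *\<^sub>v x) $ i = (\<Sum>j = 0..<n. (if E i j then 1 else 0) * x $ j)"
    using assms unfolding adj_mat_def mult_mat_vec_def scalar_prod_def by simp
  also have "\<dots> = (\<Sum>j = 0..<n. if E i j then x $ j else 0)"
    by (rule sum.cong) auto
  also have "\<dots> = (\<Sum>j \<in> {j\<in>{0..<n}. E i j}. x $ j)"
    by (rule sum.inter_filter[symmetric]) simp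
  finally show ?thesis .
qed

lemma real_eigenvalue_le_graph_spec_radius:
  assumes "0 < n" "x \<in> carrier_vec n" "x \<noteq> 0\<^sub>v n"
    and "adj_mat n E *\<^sub>v x = complex_of_real s \<cdot>\<^sub>v x"
  shows "\<bar>s\<bar> \<le> graph_spec_radius n E"
proof -
  have A: "adj_mat n E \<in> carrier_mat n n" unfolding adj_mat_def by simp
  have "eigenvalue (adj_mat n E) (complex_of_real s)"
    unfolding eigenvalue_def eigenvector_def using A assms by (intro exI[of _ x]) auto
  hence "cmod (complex_of_real s) \<in> cmod ` spectrum (adj_mat n E)"
    unfolding spectrum_def by (intro imageI) simp
  hence "cmod (complex_of_real s) \<le> spectral_radius (adj_mat n E)"
    using spectral_radius_mem_max(2)[OF A assms(1)] by blast
  thus ?thesis unfolding graph_spec_radius_def by simp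
qed

lemma complete_bipartite_eigenvector:
  assumes "k < n"
  defines "x \<equiv> vec n (\<lambda>i. complex_of_real (if i < k then sqrt (real (n-k)) else sqrt (real k)))"
  shows "adj_mat n (complete_bipartite n k) *\<^sub>v x
    = complex_of_real (sqrt (real k * real (n-k))) \<cdot>\<^sub>v x"
proof (rule eq_vecI)
  define s where "s = sqrt (real k * real (n-k))"
  show "dim_vec (adj_mat n (complete_bipartite n k) *\<^sub>v x) = dim_vec (complex_of_real s \<cdot>\<^sub>v x)"
    unfolding adj_mat_def x_def by simp
  fix i assume "i < dim_vec (complex_of_real s \<cdot>\<^sub>v x)"
  hence i: "i < n" unfolding x_def by simp
  have "(adj_mat n (complete_bipartite n k) *\<^sub>v x) $ i
      = (\<Sum>j \<in> {j\<in>{0..<n}. complete_bipartite n k i j}. x $ j)"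
    using i by (intro adj_mat_mult_vec_nth) (simp_all add: x_def)
  also have "\<dots> = complex_of_real s * x $ i"
  proof (cases "i < k")
    case True
    have "{j\<in>{0..<n}. complete_bipartite n k i j} = {k..<n}"
      using True unfolding complete_bipartite_def by auto
    moreover have "\<forall>j\<in>{k..<n}. x $ j = complex_of_real (sqrt (real k))" by (simp add: x_def)
    moreover have "s * sqrt (real (n-k)) = real (n-k) * sqrt (real k)"
      unfolding s_def using assms by (simp add: real_sqrt_mult)
    ultimately show ?thesis using True i
      by (simp add: x_def) (metis of_real_mult of_real_of_nat_eq)
  next
    case False
    have "{j\<in>{0..<n}. complete_bipartite n k i j} = {0..<k}"
      using False i assms unfolding complete_bipartite_def by auto
    moreover have "\<forall>j\<in>{0..<k}. x $ j = complex_of_real (sqrt (real (n-k)))"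
      using assms by (simp add: x_def)
    moreover have "s * sqrt (real k) = real k * sqrt (real (n-k))"
      unfolding s_def using assms by (simp add: real_sqrt_mult)
    ultimately show ?thesis using False i
      by (simp add: x_def) (metis of_real_mult of_real_of_nat_eq)
  qed
  also have "\<dots> = (complex_of_real s \<cdot>\<^sub>v x) $ i" using i unfolding x_def by simp
  finally show "(adj_mat n (complete_bipartite n k) *\<^sub>v x) $ i = (complex_of_real s \<cdot>\<^sub>v x) $ i" .
qed

lemma spectral_radius_complete_bipartite_ge:
  assumes "1 \<le> k" "k < n"
  shows "sqrt (real k * real (n-k)) \<le> graph_spec_radius n (complete_bipartite n k)"
proof -
  define x where
    "x = vec n (\<lambda>i. complex_of_real (if i < k then sqrt (real (n-k)) else sqrt (real k)))"
  have "x $ 0 \<noteq> 0" using assms by (simp add: x_def)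
  hence "x \<noteq> 0\<^sub>v n" using assms by auto
  hence "\<bar>sqrt (real k * real (n-k))\<bar> \<le> graph_spec_radius n (complete_bipartite n k)"
    using complete_bipartite_eigenvector[OF assms(2)] assms
    by (intro real_eigenvalue_le_graph_spec_radius[of n x]) (simp_all add: x_def)
  thus ?thesis by simp
qed

lemma graph_on_complete_bipartite: "k \<le> n \<Longrightarrow> graph_on n (complete_bipartite n k)"
  unfolding graph_on_def complete_bipartite_def by auto

text \<open>Every edge has an endpoint in \<open>{0..<k}\<close>, so a cycle has at most \<open>2k\<close> vertices.\<close>
lemma complete_bipartite_no_long_cycle:
  assumes m: "2*k+1 \<le> m"
  shows "\<not> contains_cycle n (complete_bipartite n k) m"
proof
  assume "contains_cycle n (complete_bipartite n k) m"
  then obtain f where f: "inj_on f {0..<m}" "\<forall>i<m. complete_bipartite n k (f i) (f (Suc i mod m))"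
    unfolding contains_cycle_def by blast
  define S where "S = {i\<in>{0..<m}. f i < k}"
  define T where "T = {i\<in>{0..<m}. f (Suc i mod m) < k}"
  have m0: "0 < m" using m by simp
  have cS: "card S \<le> k"
  proof -
    have "inj_on f S" using f(1) unfolding S_def by (rule inj_on_subset) auto
    hence "card S = card (f ` S)" by (simp add: card_image)
    also have "\<dots> \<le> card {..<k}" by (rule card_mono) (auto simp: S_def)
    finally show ?thesis by simp
  qed
  have cT: "card T \<le> card S"
  proof -
    have inj: "inj_on (\<lambda>i. Suc i mod m) T"
    proof (rule inj_onI)
      fix i j assume "i \<in> T" "j \<in> T" "Suc i mod m = Suc j mod m"
      hence "(1 + i) mod m = (1 + j) mod m" "i < m" "j < m" unfolding T_def by auto
      thus "i = j" using add_mod_inj by blast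
    qed
    have "(\<lambda>i. Suc i mod m) ` T \<subseteq> S" unfolding T_def S_def using m0 by auto
    thus ?thesis using card_inj_on_le[OF inj] by (simp add: S_def)
  qed
  have "{0..<m} \<subseteq> S \<union> T" using f(2) unfolding S_def T_def complete_bipartite_def by auto
  hence "card {0..<m} \<le> card (S \<union> T)" by (rule card_mono[rotated]) (simp add: S_def T_def)
  also have "\<dots> \<le> card S + card T" by (rule card_Un_le)
  finally show False using cS cT m by simp
qed

section \<open>Perron vectors of the extremal graphs\<close>

lemma spectral_radius_mult_perron_le_deg:
  assumes np: "normalized_perron n E v" and u: "u < n"
  shows "graph_spec_radius n E * v u \<le> real (deg E {..<n} u)"
proof -
  have le1: "v w \<le> 1" if "w < n" for w
  proof -
    have "v w \<le> Max (v ` {0..<n})" using that by (intro Max_ge) auto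
    thus ?thesis using np unfolding normalized_perron_def by simp
  qed
  have "graph_spec_radius n E * v u = (\<Sum>w<n. if E u w then v w else 0)"
    using np u unfolding normalized_perron_def by simp
  also have "\<dots> \<le> (\<Sum>w<n. if E u w then 1 else 0)"
    by (rule sum_mono) (use le1 in auto)
  also have "\<dots> = real (card {w\<in>{..<n}. E u w})"
    by (simp add: sum.If_cases Int_def)
  finally show ?thesis unfolding deg_def .
qed

lemma card_perron_superlevel_le:
  fixes Z \<beta> :: real
  assumes np: "normalized_perron n E v" and \<beta>: "0 < \<beta>" and P: "\<And>u. P u \<Longrightarrow> \<beta> \<le> v u"
    and pos: "0 < graph_spec_radius n E"
    and sum_deg: "real (\<Sum>u\<in>{..<n}. deg E {..<n} u) \<le> Z * graph_spec_radius n E"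
  shows "real (card {u. u < n \<and> P u}) \<le> Z / \<beta>"
proof -
  define \<rho> where "\<rho> = graph_spec_radius n E"
  define A where "A = {u. u < n \<and> P u}"
  have "real (card A) * (\<rho> * \<beta>) = (\<Sum>u\<in>A. \<rho> * \<beta>)" by simp
  also have "\<dots> \<le> (\<Sum>u\<in>A. \<rho> * v u)"
    by (rule sum_mono) (use P pos in \<open>auto simp: A_def \<rho>_def\<close>)
  also have "\<dots> \<le> (\<Sum>u\<in>A. real (deg E {..<n} u))"
    by (rule sum_mono) (use spectral_radius_mult_perron_le_deg[OF np] in \<open>auto simp: A_def \<rho>_def\<close>)
  also have "\<dots> \<le> (\<Sum>u\<in>{..<n}. real (deg E {..<n} u))"
    by (rule sum_mono2) (auto simp: A_def)
  also have "\<dots> \<le> Z * \<rho>" using sum_deg unfolding \<rho>_def by simp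
  finally have "real (card A) * \<beta> * \<rho> \<le> Z * \<rho>" by (simp add: algebra_simps)
  hence "real (card A) * \<beta> \<le> Z" using pos unfolding \<rho>_def by simp
  thus ?thesis unfolding A_def using \<beta> by (simp add: field_simps)
qed

lemma SPEX_even_cycle_free:
  assumes E: "E \<in> SPEX n {2*k+2} \<or> E \<in> SPEX n {2*k+1, 2*k+2}" and k: "1 \<le> k" "k < n"
  shows "graph_on n E" "\<not> contains_cycle n E (2*(k+1))"
    "sqrt (real k * real (n-k)) \<le> graph_spec_radius n E"
proof -
  have "graph_on n (complete_bipartite n k)" using k by (simp add: graph_on_complete_bipartite)
  moreover have "\<not> contains_cycle n (complete_bipartite n k) m" if "m \<in> {2*k+1, 2*k+2}" for m
    using that by (intro complete_bipartite_no_long_cycle) auto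
  ultimately have "graph_on n E \<and> \<not> contains_cycle n E (2*k+2)
      \<and> graph_spec_radius n (complete_bipartite n k) \<le> graph_spec_radius n E"
    using E unfolding SPEX_def cycle_free_def by auto
  thus "graph_on n E" "\<not> contains_cycle n E (2*(k+1))"
    "sqrt (real k * real (n-k)) \<le> graph_spec_radius n E"
    using spectral_radius_complete_bipartite_ge[OF k] by auto
qed

lemma le_powr_inverse_if_power_le:
  fixes a x :: real
  assumes "0 < a" "a ^ (k+1) \<le> x"
  shows "a \<le> x powr (1 / real (k+1))"
proof -
  have "a ^ (k+1) = a powr real (k+1)" by (rule powr_realpow[symmetric]) (rule assms(1))
  hence "a = (a ^ (k+1)) powr (1 / real (k+1))" using assms(1) by (simp add: powr_powr)
  also have "\<dots> \<le> x powr (1 / real (k+1))" using assms by (intro powr_mono2) simp_all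
  finally show ?thesis .
qed

lemma even_cycle_bound_le_spectral_bound:
  fixes n k :: nat
  assumes k: "2 \<le> k" and n: "2*k \<le> n"
  shows "10 * real k * (real n powr (1/real (k+1))) * real n
     \<le> 16 * sqrt (real k) * real n powr ((real k + 3) / (2 * real k + 2))
        * sqrt (real k * real (n-k))"
proof -
  have n0: "0 < real n" using k n by simp
  define g where "g = real n powr ((real k + 3) / (2 * real k + 2))"
  have e1: "real n powr (1/real (k+1)) * real n = g * sqrt (real n)"
  proof -
    have "real n powr (1/real (k+1)) * real n = real n powr (1/real (k+1)) * real n powr 1"
      using n0 by simp
    also have "\<dots> = real n powr (1/real (k+1) + 1)" by (simp add: powr_add)
    also have "1/real (k+1) + 1 = (real k + 3) / (2 * real k + 2) + 1/2" by (simp add: field_simps)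
    also have "real n powr ((real k + 3) / (2 * real k + 2) + 1/2) = g * real n powr (1/2)"
      unfolding g_def by (simp add: powr_add)
    also have "real n powr (1/2) = sqrt (real n)" using n0 by (simp add: powr_half_sqrt)
    finally show ?thesis .
  qed
  have e2: "10 * sqrt (real n) \<le> 16 * sqrt (real (n-k))"
  proof -
    have "10 * sqrt (real n) = sqrt (100 * real n)" by (simp add: real_sqrt_mult)
    also have "\<dots> \<le> sqrt (256 * real (n-k))"
      using n k by (intro real_sqrt_le_mono) (simp add: of_nat_diff)
    also have "\<dots> = 16 * sqrt (real (n-k))" by (simp add: real_sqrt_mult)
    finally show ?thesis .
  qed
  have g0: "0 \<le> g" unfolding g_def by simp
  have "10 * real k * (real n powr (1/real (k+1))) * real n = real k * g * (10 * sqrt (real n))"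
    using e1 by (simp add: algebra_simps)
  also have "\<dots> \<le> real k * g * (16 * sqrt (real (n-k)))"
    by (rule mult_left_mono[OF e2]) (use g0 in simp)
  also have "\<dots> = 16 * sqrt (real k) * g * (sqrt (real k) * sqrt (real (n-k)))"
    by (simp add: algebra_simps)
  also have "\<dots> = 16 * sqrt (real k) * g * sqrt (real k * real (n-k))" by (simp add: real_sqrt_mult)
  finally show ?thesis unfolding g_def .
qed

theorem mainTheorem4:
  fixes k :: nat and \<alpha> :: real
  assumes "k \<ge> 2" and "0 < \<alpha>" and "\<alpha> < 1"
  shows "\<exists>N. \<forall>n\<ge>N. \<forall>E v.
    (E \<in> SPEX n {2*k+2} \<or> E \<in> SPEX n {2*k+1, 2*k+2}) \<and> normalized_perron n E v \<longrightarrow>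
      real (card {u. u < n \<and> v u > \<alpha>}) \<le> 16 * sqrt (real k) * real n powr ((real k + 3) / (2 * real k + 2)) / \<alpha> \<and>
      real (card {u. u < n \<and> v u \<ge> \<alpha> / 3}) \<le> 48 * sqrt (real k) * real n powr ((real k + 3) / (2 * real k + 2)) / \<alpha>"
proof (intro exI[of _ "12^(k+1) + 2*k"] allI impI, elim conjE)
  fix n E v
  assume n: "12^(k+1) + 2*k \<le> n" and E: "E \<in> SPEX n {2*k+2} \<or> E \<in> SPEX n {2*k+1, 2*k+2}"
    and np: "normalized_perron n E v"
  define Z where "Z = 16 * sqrt (real k) * real n powr ((real k + 3) / (2 * real k + 2))"
  have k: "2 \<le> k" "1 \<le> k" "k < n" "2*k \<le> n" using assms(1) n by auto
  note H = SPEX_even_cycle_free[OF E k(2,3)]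
  have "0 < sqrt (real k * real (n-k))" using k by simp
  hence pos: "0 < graph_spec_radius n E" using H(3) by linarith
  have "real (\<Sum>u\<in>{..<n}. deg E {..<n} u) \<le> 10 * real k * (real n powr (1/real (k+1))) * real n"
  proof (rule sum_deg_le_even_cycle_free[OF H(1,2) k(1) le_powr_inverse_if_power_le])
    have "real (12 ^ (k+1)) \<le> real n" using n by linarith
    thus "(12::real) ^ (k+1) \<le> real n" by simp
  qed simp
  also have "\<dots> \<le> Z * sqrt (real k * real (n-k))"
    unfolding Z_def by (rule even_cycle_bound_le_spectral_bound[OF k(1,4)])
  also have "\<dots> \<le> Z * graph_spec_radius n E" by (rule mult_left_mono[OF H(3)]) (simp add: Z_def)
  finally have sum_deg: "real (\<Sum>u\<in>{..<n}. deg E {..<n} u) \<le> Z * graph_spec_radius n E" .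
  have "real (card {u. u < n \<and> v u > \<alpha>}) \<le> Z / \<alpha>"
    by (rule card_perron_superlevel_le[OF np assms(2) _ pos sum_deg]) simp
  moreover have "real (card {u. u < n \<and> v u \<ge> \<alpha> / 3}) \<le> Z / (\<alpha> / 3)"
    by (rule card_perron_superlevel_le[OF np _ _ pos sum_deg]) (use assms(2) in auto)
  ultimately show "real (card {u. u < n \<and> v u > \<alpha>}) \<le> Z / \<alpha> \<and>
      real (card {u. u < n \<and> v u \<ge> \<alpha> / 3}) \<le> 48 * sqrt (real k) * real n powr ((real k + 3) / (2 * real k + 2)) / \<alpha>"
    by (simp add: Z_def)
qed

end
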